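(* Suppose the standing assumptions (1)–(5) below hold. Let the updated dataset be $\mathcal{D}'=(\mathbf{Z}',\mathbf{y})$, which differs from $\mathcal{D}=(\mathbf{Z},\mathbf{y})$ only in the embedding of the $n$-th training graph: $\mathbf{z}_i'=\mathbf{z}_i$ for $i<n$ and $\mathbf{z}_n'=\Phi(\mathbf{S}_n,\mathbf{x}_n')$, where $\mathbf{x}_n'\in\mathbb{R}^{g_n}$ agrees with $\mathbf{x}_n$ except that $[\mathbf{x}_n']_{g_n}=0$ (feature removal of the $g_n$-th node). Let $B$ be the upper frame constant of the graph wavelets used in the GST. Then the updated model $\mathbf{w}'=\mathbf{w}^\star+\mathbf{H}_{\mathbf{w}^\star}^{-1}\Delta$ satisfies $$\|\nabla L(\mathbf{w}',\mathcal{D}')\|\leq \frac{\gamma_2 F^3}{\lambda^2 n}\min\left\{4C_1^2,\ \frac{(\gamma_1 C_1 F^2+\lambda C_2 F)^2}{\lambda^2 g_n}\right\},\qquad F=\sqrt{\sum_{l=0}^{L-1}B^{2l}}.$$ In particular, for tight energy-preserving wavelets one has $B=1$ and $F=\sqrt{L}$.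
   Context: Setting (graph classification). There are $n$ training graphs $\mathcal{G}_1,\dots,\mathcal{G}_n$. Graph $\mathcal{G}_i$ has $g_i$ nodes, a symmetric adjacency matrix $\mathbf{S}_i\in\mathbb{R}^{g_i\times g_i}$ (the graph shift operator), a node signal $\mathbf{x}_i\in\mathbb{R}^{g_i}$ (one scalar feature per node) and a label $y_i$. Graph scattering transform (GST). Fix positive integers $J,L$ and wavelet kernel functions $h_1,\dots,h_J:\mathbb{R}\to\mathbb{R}$. For a symmetric $\mathbf{S}=\mathbf{V}\mathbf{\Lambda}\mathbf{V}^T$ with eigenvalues $\lambda_1,\dots,\lambda_g$, set $\mathbf{H}_j(\mathbf{S})=\mathbf{V}\,\mathrm{diag}(h_j(\lambda_1),\dots,h_j(\lambda_g))\mathbf{V}^T$. The wavelets form a frame: there are constants $0<A\le B$ with $A^2\|\mathbf{x}\|^2\le\sum_{j=1}^J\|\mathbf{H}_j(\mathbf{S})\mathbf{x}\|^2\le B^2\|\mathbf{x}\|^2$ for all $\mathbf{x}$. Let $\rho$ be the entrywise absolute value. For a path $p=(j_1,\dots,j_l)$ with $j_k\in\{1,\dots,J\}$ and $0\le l\le L-1$, define $\Phi_{()}(\mathbf{S},\mathbf{x})=\mathbf{x}$ and $\Phi_{(j_1,\dots,j_l)}(\mathbf{S},\mathbf{x})=\rho\big(\mathbf{H}_{j_l}(\mathbf{S})\Phi_{(j_1,\dots,j_{l-1})}(\mathbf{S},\mathbf{x})\big)$, and the scalar coefficient $\phi_p(\mathbf{S},\mathbf{x})=U\Phi_p(\mathbf{S},\mathbf{x})$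 with the averaging operator $U=\frac{1}{g}\mathbf{1}^T$ ($g$ the number of nodes). The embedding $\Phi(\mathbf{S},\mathbf{x})\in\mathbb{R}^d$, $d=\sum_{l=0}^{L-1}J^l$, is the concatenation of all $\phi_p(\mathbf{S},\mathbf{x})$. Set $\mathbf{z}_i=\Phi(\mathbf{S}_i,\mathbf{x}_i)$, let $\mathbf{Z}$ have rows $\mathbf{z}_i^T$, and $\mathcal{D}=(\mathbf{Z},\mathbf{y})$. Learning and update. $\ell(s,y)$ is convex and twice differentiable in $s$; $\ell'$, $\ell''$ denote derivatives in $s$, and $\nabla$, $\nabla^2$ denote gradient/Hessian in $\mathbf{w}$. For a dataset $\mathcal{D}=(\mathbf{Z},\mathbf{y})$, $L(\mathbf{w},\mathcal{D})=\sum_{i=1}^n\big(\ell(\mathbf{w}^T\mathbf{z}_i,y_i)+\frac{\lambda}{2}\|\mathbf{w}\|^2\big)$ with $\lambda>0$, and $\mathbf{w}^\star=\arg\min_{\mathbf{w}}L(\mathbf{w},\mathcal{D})$. For the updated dataset $\mathcal{D}'$, set $\mathbf{H}_{\mathbf{w}^\star}=\nabla^2L(\mathbf{w}^\star,\mathcal{D}')$ and $\Delta=\nabla L(\mathbf{w}^\star,\mathcal{D})-\nabla L(\mathbf{w}^\star,\mathcal{D}')$. Norms are $\ell_2$ for vectors and operator norm for matrices. Standing assumptions: there are constants $C_1,C_2,\gamma_1,\gamma_2$ such that for every embedding $\mathbf{z}_i$ (of $\mathcal{D}$ or $\mathcal{D}'$) and every $\mathbf{w}\in\mathbb{R}^d$: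 (1) $\|\nabla\ell(\mathbf{w}^T\mathbf{z}_i,y_i)\|\le C_1$; (2) $|\ell'(\mathbf{w}^T\mathbf{z}_i,y_i)|\le C_2$; (3) $\ell'$ is $\gamma_1$-Lipschitz; (4) $\ell''$ is $\gamma_2$-Lipschitz; (5) the signals satisfy $|[\mathbf{x}_i]_j|\le1$ for all $i$ and all $j\in\{1,\dots,g_i\}$. *)

theory Defs
  imports "HOL-Analysis.Analysis" "Jordan_Normal_Form.Matrix"
begin

definition vnorm :: "real vec \<Rightarrow> real" where
  "vnorm v = sqrt (scalar_prod v v)"

definition diagm :: "nat \<Rightarrow> (nat \<Rightarrow> real) \<Rightarrow> real mat" where
  "diagm g f = mat g g (\<lambda>(i,j). if i = j then f i else 0)"

definition matfun :: "(real \<Rightarrow> real) \<Rightarrow> real mat \<Rightarrow> real mat" where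
  "matfun h S = (SOME M. \<exists>V lam. V \<in> carrier_mat (dim_row S) (dim_row S)
      \<and> transpose_mat V * V = 1\<^sub>m (dim_row S)
      \<and> S = V * diagm (dim_row S) lam * transpose_mat V
      \<and> M = V * diagm (dim_row S) (\<lambda>k. h (lam k)) * transpose_mat V)"

definition matinv :: "real mat \<Rightarrow> real mat" where
  "matinv H = (SOME B. B \<in> carrier_mat (dim_row H) (dim_row H)
      \<and> B * H = 1\<^sub>m (dim_row H) \<and> H * B = 1\<^sub>m (dim_row H))"

definition wavelet :: "(nat \<Rightarrow> real \<Rightarrow> real) \<Rightarrow> nat \<Rightarrow> real mat \<Rightarrow> real mat" where
  "wavelet h j S = matfun (h j) S"

text \<open>Phi_p(S,x) for a path p = [j_1,...,j_l]:
  Phi_[] = x, Phi_(p@[j]) = rho(H_j(S) Phi_p), rho = entrywise absolute value.\<close>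
definition Phi_path :: "(nat \<Rightarrow> real \<Rightarrow> real) \<Rightarrow> real mat \<Rightarrow> real vec \<Rightarrow> nat list \<Rightarrow> real vec" where
  "Phi_path h S x p = foldl (\<lambda>v j. map_vec abs (wavelet h j S *\<^sub>v v)) x p"

definition phi_path :: "(nat \<Rightarrow> real \<Rightarrow> real) \<Rightarrow> real mat \<Rightarrow> real vec \<Rightarrow> nat list \<Rightarrow> real" where
  "phi_path h S x p = (\<Sum>k<dim_vec x. Phi_path h S x p $ k) / real (dim_vec x)"

definition gst_paths :: "nat \<Rightarrow> nat \<Rightarrow> nat list list" where
  "gst_paths J L = concat (map (\<lambda>l. List.n_lists l [1..<Suc J]) [0..<L])"

definition gst :: "(nat \<Rightarrow> real \<Rightarrow> real) \<Rightarrow> nat \<Rightarrow> nat \<Rightarrow> real mat \<Rightarrow> real vec \<Rightarrow> real vec" where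
  "gst h J L S x = vec_of_list (map (phi_path h S x) (gst_paths J L))"

definition lossL :: "(real \<Rightarrow> 'y \<Rightarrow> real) \<Rightarrow> real \<Rightarrow> nat \<Rightarrow> (nat \<Rightarrow> real vec) \<Rightarrow> (nat \<Rightarrow> 'y)
    \<Rightarrow> real vec \<Rightarrow> real" where
  "lossL l lam n Z y w = (\<Sum>i<n. l (scalar_prod w (Z i)) (y i) + lam / 2 * (vnorm w)\<^sup>2)"

text \<open>Gradient in w of L(w,D), in terms of l' = d l / d s:
  sum_{i<n} (l'(w^T z_i, y_i) z_i + lambda w).\<close>
definition gradL :: "(real \<Rightarrow> 'y \<Rightarrow> real) \<Rightarrow> real \<Rightarrow> nat \<Rightarrow> (nat \<Rightarrow> real vec) \<Rightarrow> (nat \<Rightarrow> 'y)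
    \<Rightarrow> real vec \<Rightarrow> real vec" where
  "gradL l' lam n Z y w = vec (dim_vec w)
     (\<lambda>k. \<Sum>i<n. l' (scalar_prod w (Z i)) (y i) * (Z i $ k) + lam * (w $ k))"

text \<open>Hessian in w of L(w,D), in terms of l'' = d^2 l / d s^2:
  sum_{i<n} (l''(w^T z_i, y_i) z_i z_i^T + lambda I).\<close>
definition hessL :: "(real \<Rightarrow> 'y \<Rightarrow> real) \<Rightarrow> real \<Rightarrow> nat \<Rightarrow> (nat \<Rightarrow> real vec) \<Rightarrow> (nat \<Rightarrow> 'y)
    \<Rightarrow> real vec \<Rightarrow> real mat" where
  "hessL l'' lam n Z y w = mat (dim_vec w) (dim_vec w)
     (\<lambda>(k,m). \<Sum>i<n. l'' (scalar_prod w (Z i)) (y i) * (Z i $ k) * (Z i $ m)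
                     + (if k = m then lam else 0))"

end

theory Submission
  imports Defs "Jordan_Normal_Form.Schur_Decomposition"
    "HOL-Computational_Algebra.Fundamental_Theorem_Algebra"
begin

(* The update w' = w* + H^-1 Delta is one Newton step for L(-, D') started at w*: since
   grad L(w*, D) = 0, the gradient of the new objective at w* is -Delta. Because l'' is
   gamma2-Lipschitz and every embedding has norm at most F, the gradient after the step is at most
   n gamma2 F^3 |H^-1 Delta|^2, and H dominates n lam I, so |H^-1 Delta| <= |Delta| / (n lam).
   Only the n-th summand of the gradient changes, hence |Delta| <= 2 C1, and also
   |Delta| <= gamma1 |w*| |z_n - z_n'| |z_n| + C2 |z_n - z_n'| with |w*| <= C1 / lam by first-order
   optimality. The scattering transform is (F / sqrt g)-Lipschitz (each layer expands energy by at
   most B^2, the absolute value is a contraction, and averaging over g nodes costs 1 / sqrt g), it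
   maps signals with entries in [-1, 1] into the ball of radius F, and removing a feature moves the
   signal by at most 1. The spectral theorem is needed only to know that the wavelet matrices
   H_j(S) are g x g. *)

section \<open>Real vectors\<close>

lemma mult_mat_vec_index_sum:
  "A \<in> carrier_mat n m \<Longrightarrow> dim_vec v = m \<Longrightarrow> i < n \<Longrightarrow>
    (A *\<^sub>v v) $ i = (\<Sum>j<m. A $$ (i,j) * v $ j)"
  by (auto simp: scalar_prod_def lessThan_atLeast0 row_def intro!: sum.cong)

lemma scalar_prod_self_nonneg: "0 \<le> (v :: real vec) \<bullet> v"
  by (simp add: scalar_prod_def sum_nonneg)

lemma scalar_prod_self_pos: "(v :: real vec) \<in> carrier_vec n \<Longrightarrow> v \<noteq> 0\<^sub>v n \<Longrightarrow> 0 < v \<bullet> v"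
  using conjugate_square_greater_0_vec[of v n] by simp

lemma vnorm_L2: "vnorm v = L2_set (\<lambda>i. v $ i) {..<dim_vec v}"
  unfolding vnorm_def L2_set_def scalar_prod_def
  by (simp add: lessThan_atLeast0 power2_eq_square)

lemma vnorm_nonneg [simp]: "0 \<le> vnorm v"
  unfolding vnorm_L2 by simp

lemma vnorm_square: "(vnorm v)\<^sup>2 = v \<bullet> v"
  unfolding vnorm_def by (simp add: scalar_prod_self_nonneg)

lemma vnorm_le_sqrt: "v \<bullet> v \<le> r \<Longrightarrow> vnorm v \<le> sqrt r"
  unfolding vnorm_def by simp

lemma abs_scalar_prod_le_vnorm:
  fixes a b :: "real vec"
  assumes "dim_vec a = dim_vec b"
  shows "\<bar>a \<bullet> b\<bar> \<le> vnorm a * vnorm b"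
proof -
  have "\<bar>a \<bullet> b\<bar> \<le> (\<Sum>i<dim_vec b. \<bar>a $ i\<bar> * \<bar>b $ i\<bar>)"
    unfolding scalar_prod_def lessThan_atLeast0[symmetric]
    by (metis (no_types, lifting) abs_mult sum.cong sum_abs)
  also have "\<dots> \<le> L2_set (\<lambda>i. a $ i) {..<dim_vec b} * L2_set (\<lambda>i. b $ i) {..<dim_vec b}"
    by (rule L2_set_mult_ineq)
  finally show ?thesis using assms by (simp add: vnorm_L2)
qed

lemma vnorm_smult: "vnorm (c \<cdot>\<^sub>v v) = \<bar>c\<bar> * vnorm v"
proof -
  have "vnorm (c \<cdot>\<^sub>v v) = L2_set (\<lambda>i. \<bar>c\<bar> * v $ i) {..<dim_vec v}"
    unfolding vnorm_L2 L2_set_def by (auto simp: power_mult_distrib intro!: sum.cong)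
  then show ?thesis unfolding vnorm_L2 by (simp add: L2_set_right_distrib)
qed

lemma vnorm_add_le:
  fixes a b :: "real vec"
  assumes "dim_vec a = dim_vec b"
  shows "vnorm (a + b) \<le> vnorm a + vnorm b"
proof -
  have "vnorm (a + b) = L2_set (\<lambda>i. a $ i + b $ i) {..<dim_vec b}"
    unfolding vnorm_L2 using assms by (auto intro!: L2_set_cong)
  also have "\<dots> \<le> L2_set (\<lambda>i. a $ i) {..<dim_vec b} + L2_set (\<lambda>i. b $ i) {..<dim_vec b}"
    by (rule L2_set_triangle_ineq)
  finally show ?thesis using assms by (simp add: vnorm_L2)
qed

lemma vnorm_diff_le:
  fixes a b :: "real vec"
  assumes "dim_vec a = dim_vec b"
  shows "vnorm (a - b) \<le> vnorm a + vnorm b"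
proof -
  have "a - b = a + (-1) \<cdot>\<^sub>v b" using assms by (auto intro!: eq_vecI)
  then show ?thesis using vnorm_add_le[of a "(-1) \<cdot>\<^sub>v b"] assms by (simp add: vnorm_smult)
qed

lemma L2_set_sum_le:
  "finite I \<Longrightarrow> L2_set (\<lambda>k. \<Sum>i\<in>I. f i k) A \<le> (\<Sum>i\<in>I. L2_set (f i) A)"
proof (induction I rule: finite_induct)
  case (insert x I)
  then show ?case
    using L2_set_triangle_ineq[of "f x" "\<lambda>k. \<Sum>i\<in>I. f i k" A] by simp
qed (simp add: L2_set_0')

lemma vnorm_lincomb_le:
  fixes z :: "'i \<Rightarrow> real vec"
  assumes "finite I" and z: "\<And>i. i \<in> I \<Longrightarrow> z i \<in> carrier_vec d"
  shows "vnorm (vec d (\<lambda>k. \<Sum>i\<in>I. c i * z i $ k)) \<le> (\<Sum>i\<in>I. \<bar>c i\<bar> * vnorm (z i))"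
proof -
  have "vnorm (vec d (\<lambda>k. \<Sum>i\<in>I. c i * z i $ k)) = L2_set (\<lambda>k. \<Sum>i\<in>I. c i * z i $ k) {..<d}"
    unfolding vnorm_L2 by (auto intro!: L2_set_cong)
  also have "\<dots> \<le> (\<Sum>i\<in>I. L2_set (\<lambda>k. c i * z i $ k) {..<d})"
    by (rule L2_set_sum_le[OF assms(1)])
  also have "\<dots> = (\<Sum>i\<in>I. \<bar>c i\<bar> * vnorm (z i))"
  proof (intro sum.cong refl)
    fix i assume "i \<in> I"
    then have "L2_set (\<lambda>k. c i * z i $ k) {..<d} = vnorm (c i \<cdot>\<^sub>v z i)"
      using z[of i] unfolding vnorm_L2 by (auto intro!: L2_set_cong)
    then show "L2_set (\<lambda>k. c i * z i $ k) {..<d} = \<bar>c i\<bar> * vnorm (z i)"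
      by (simp add: vnorm_smult)
  qed
  finally show ?thesis .
qed

lemma vnorm_smult_diff_le:
  fixes u v :: "real vec"
  assumes "dim_vec u = dim_vec v"
  shows "vnorm (a \<cdot>\<^sub>v u - b \<cdot>\<^sub>v v) \<le> \<bar>a - b\<bar> * vnorm u + \<bar>b\<bar> * vnorm (u - v)"
proof -
  have "a \<cdot>\<^sub>v u - b \<cdot>\<^sub>v v = (a - b) \<cdot>\<^sub>v u + b \<cdot>\<^sub>v (u - v)"
    using assms by (auto intro!: eq_vecI simp: algebra_simps)
  then show ?thesis
    using vnorm_add_le[of "(a - b) \<cdot>\<^sub>v u" "b \<cdot>\<^sub>v (u - v)"] assms by (simp add: vnorm_smult)
qed

section \<open>Spectral theorem for real symmetric matrices\<close>

definition normalize_vec :: "real vec \<Rightarrow> real vec" where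
  "normalize_vec w = (1 / sqrt (w \<bullet> w)) \<cdot>\<^sub>v w"

lemma normalize_vec_carrier [simp]: "w \<in> carrier_vec n \<Longrightarrow> normalize_vec w \<in> carrier_vec n"
  by (simp add: normalize_vec_def)

lemma normalize_vec_scalar_prod:
  assumes "v \<in> carrier_vec n" "w \<in> carrier_vec n"
  shows "normalize_vec v \<bullet> normalize_vec w = v \<bullet> w / (sqrt (v \<bullet> v) * sqrt (w \<bullet> w))"
  using assms by (simp add: normalize_vec_def)

lemma normalize_vec_self:
  assumes "w \<in> carrier_vec n" "w \<noteq> 0\<^sub>v n"
  shows "normalize_vec w \<bullet> normalize_vec w = 1"
proof -
  have "0 < w \<bullet> w" using scalar_prod_self_pos[OF assms] .
  then show ?thesis using assms(1)
    by (simp add: normalize_vec_scalar_prod real_sqrt_mult[symmetric])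
qed

lemma complex_eigenvector_exists:
  fixes A :: "complex mat"
  assumes A: "A \<in> carrier_mat n n" and n: "0 < n"
  shows "\<exists>v e. v \<in> carrier_vec n \<and> v \<noteq> 0\<^sub>v n \<and> A *\<^sub>v v = e \<cdot>\<^sub>v v"
proof -
  have "\<not> constant (poly (char_poly A))"
    using degree_monic_char_poly[OF A] n by (simp add: constant_degree)
  then obtain e where "poly (char_poly A) e = 0"
    using fundamental_theorem_of_algebra by blast
  then have "eigenvalue A e" using eigenvalue_root_char_poly[OF A] by simp
  then show ?thesis unfolding eigenvalue_def eigenvector_def using A by auto
qed

text \<open>The quadratic form \<open>v\<^sup>H S v = e \<cdot> v\<^sup>H v\<close> equals its own conjugate because \<open>S\<close> is real
  symmetric, and \<open>v\<^sup>H v > 0\<close>.\<close>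
lemma real_symmetric_eigenvalue_real:
  fixes S :: "real mat"
  assumes S: "S \<in> carrier_mat n n" and sym: "transpose_mat S = S"
    and v: "v \<in> carrier_vec n" "v \<noteq> 0\<^sub>v n"
    and ev: "map_mat complex_of_real S *\<^sub>v v = e \<cdot>\<^sub>v v"
  shows "cnj e = e"
proof -
  have S_ji: "S $$ (j,i) = S $$ (i,j)" if "i < n" "j < n" for i j
    using sym S that by (metis carrier_matD index_transpose_mat(1))
  have row: "(\<Sum>j<n. of_real (S $$ (i,j)) * v $ j) = e * v $ i" if "i < n" for i
    using arg_cong[OF ev, of "\<lambda>w. w $ i"] that S v
    by (subst (asm) mult_mat_vec_index_sum[of _ n n]) auto
  define q where "q = (\<Sum>i<n. cnj (v $ i) * (\<Sum>j<n. of_real (S $$ (i,j)) * v $ j))"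
  define N where "N = (\<Sum>i<n. cnj (v $ i) * v $ i)"
  have q_eq: "q = e * N" unfolding q_def N_def using row by (simp add: sum_distrib_left mult_ac)
  have "cnj q = (\<Sum>i<n. \<Sum>j<n. v $ i * of_real (S $$ (i,j)) * cnj (v $ j))"
    unfolding q_def by (simp add: sum_distrib_left mult_ac)
  also have "\<dots> = (\<Sum>j<n. \<Sum>i<n. v $ i * of_real (S $$ (i,j)) * cnj (v $ j))"
    by (rule sum.swap)
  also have "\<dots> = q" unfolding q_def
    by (auto simp: sum_distrib_left mult_ac S_ji intro!: sum.cong)
  finally have q_real: "cnj q = q" .
  have N_real: "N = of_real (\<Sum>i<n. (cmod (v $ i))\<^sup>2)"
    unfolding N_def of_real_sum by (intro sum.cong refl) (metis complex_norm_square mult.commute)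
  obtain i0 where i0: "i0 < n" "v $ i0 \<noteq> 0" using v by (metis carrier_vecD eq_vecI index_zero_vec)
  have "0 < (cmod (v $ i0))\<^sup>2" using i0 by simp
  also have "\<dots> \<le> (\<Sum>i<n. (cmod (v $ i))\<^sup>2)" using i0 by (intro member_le_sum) auto
  finally have "N \<noteq> 0" using N_real by (metis less_irrefl of_real_eq_0_iff)
  moreover have "cnj e * N = e * N" using q_real q_eq N_real
    by (metis complex_cnj_complex_of_real complex_cnj_mult)
  ultimately show ?thesis by simp
qed

lemma real_symmetric_eigenvector:
  fixes S :: "real mat"
  assumes S: "S \<in> carrier_mat n n" and sym: "transpose_mat S = S" and n: "0 < n"
  shows "\<exists>u \<mu>. u \<in> carrier_vec n \<and> u \<bullet> u = 1 \<and> S *\<^sub>v u = \<mu> \<cdot>\<^sub>v u"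
proof -
  define Sc where "Sc = map_mat complex_of_real S"
  obtain v e where v: "v \<in> carrier_vec n" "v \<noteq> 0\<^sub>v n" and ev: "Sc *\<^sub>v v = e \<cdot>\<^sub>v v"
    using complex_eigenvector_exists[of Sc n] S n by (auto simp: Sc_def)
  define r where "r = Re e"
  have e: "e = of_real r"
    using real_symmetric_eigenvalue_real[OF S sym v ev[unfolded Sc_def]] unfolding r_def
    by (metis Reals_cnj_iff complex_is_Real_iff of_real_Re)
  define a where "a = vec n (\<lambda>i. Re (v $ i))"
  define b where "b = vec n (\<lambda>i. Im (v $ i))"
  have row: "(\<Sum>j<n. of_real (S $$ (i,j)) * v $ j) = of_real r * v $ i" if "i < n" for i
    using arg_cong[OF ev, of "\<lambda>w. w $ i"] that S v e
    by (subst (asm) mult_mat_vec_index_sum[of _ n n]) (auto simp: Sc_def)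
  have "S *\<^sub>v a = r \<cdot>\<^sub>v a" "S *\<^sub>v b = r \<cdot>\<^sub>v b"
  proof -
    have "(S *\<^sub>v a) $ i = r * a $ i \<and> (S *\<^sub>v b) $ i = r * b $ i" if i: "i < n" for i
    proof -
      have "(S *\<^sub>v a) $ i = Re (\<Sum>j<n. of_real (S $$ (i,j)) * v $ j)"
        "(S *\<^sub>v b) $ i = Im (\<Sum>j<n. of_real (S $$ (i,j)) * v $ j)"
        using i S by (subst mult_mat_vec_index_sum[of _ n n]; simp add: a_def b_def Re_sum Im_sum)+
      then show ?thesis using row[OF i] i by (simp add: a_def b_def)
    qed
    then show "S *\<^sub>v a = r \<cdot>\<^sub>v a" "S *\<^sub>v b = r \<cdot>\<^sub>v b"
      using S by (auto intro!: eq_vecI simp: a_def b_def)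
  qed
  moreover have "a \<noteq> 0\<^sub>v n \<or> b \<noteq> 0\<^sub>v n"
    using v by (auto simp: a_def b_def complex_eq_iff vec_eq_iff)
  moreover have "a \<in> carrier_vec n" "b \<in> carrier_vec n" by (auto simp: a_def b_def)
  ultimately obtain u where u: "u \<in> carrier_vec n" "u \<noteq> 0\<^sub>v n" "S *\<^sub>v u = r \<cdot>\<^sub>v u" by blast
  have "S *\<^sub>v normalize_vec u = r \<cdot>\<^sub>v normalize_vec u"
    using u S by (simp add: normalize_vec_def mult_mat_vec smult_smult_assoc mult.commute)
  then show ?thesis using normalize_vec_self[OF u(1,2)] u(1) normalize_vec_carrier by blast
qed

lemma mat_of_cols_normalize_orthogonal:
  fixes ws :: "real vec list"
  assumes ws: "set ws \<subseteq> carrier_vec n" "corthogonal ws" "length ws = n"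
  defines "U \<equiv> mat_of_cols n (map normalize_vec ws)"
  shows "U \<in> carrier_mat n n" "transpose_mat U * U = 1\<^sub>m n"
    and "\<And>j. j < n \<Longrightarrow> col U j = normalize_vec (ws ! j)"
proof -
  have ws_n: "ws ! i \<in> carrier_vec n" if "i < n" for i using ws that by auto
  have orth: "(ws ! i \<bullet> ws ! j = 0) = (i \<noteq> j)" if "i < n" "j < n" for i j
    using ws(2,3) that unfolding corthogonal_def by auto
  show U: "U \<in> carrier_mat n n"
    using mat_of_cols_carrier(1)[of n "map normalize_vec ws"] ws(3) by (simp add: U_def)
  show colU: "col U j = normalize_vec (ws ! j)" if "j < n" for j
    unfolding U_def using that ws ws_n[OF that] by (subst col_mat_of_cols) auto
  show "transpose_mat U * U = 1\<^sub>m n"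
  proof (rule eq_matI)
    fix i j assume "i < dim_row (1\<^sub>m n)" "j < dim_col (1\<^sub>m n)"
    then have i: "i < n" and j: "j < n" by auto
    show "(transpose_mat U * U) $$ (i, j) = 1\<^sub>m n $$ (i, j)"
    proof (cases "i = j")
      case True
      have "ws ! i \<noteq> 0\<^sub>v n" using orth[OF i i] ws_n[OF i] by auto
      then show ?thesis using True i U colU[OF i] normalize_vec_self[OF ws_n[OF i]] by simp
    next
      case False
      then show ?thesis using i j U colU normalize_vec_scalar_prod[OF ws_n[OF i] ws_n[OF j]] orth[OF i j]
        by simp
    qed
  qed (use U in auto)
qed

lemma orthogonal_mat_extending_unit_vec:
  fixes u :: "real vec"
  assumes u: "u \<in> carrier_vec n" and u1: "u \<bullet> u = 1"
  shows "\<exists>U \<in> carrier_mat n n. transpose_mat U * U = 1\<^sub>m n \<and> col U 0 = u"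
proof -
  have u0: "u \<noteq> 0\<^sub>v n" using u1 u by auto
  interpret cof_vec_space n "TYPE(real)" .
  define b where "b = basis_completion u"
  from basis_completion[OF u u0, folded b_def]
  have dist_b: "distinct b" and indep: "\<not> lin_dep (set b)" and b: "set b \<subseteq> carrier_vec n"
    and len_b: "length b = n" by auto
  obtain vs where bv: "b = u # vs" unfolding b_def basis_completion_def by (auto simp: Let_def)
  define ws where "ws = gram_schmidt n b"
  from gram_schmidt_result[OF b dist_b indep refl, folded ws_def]
  have ws: "set ws \<subseteq> carrier_vec n" "corthogonal ws" "length ws = n" by (auto simp: len_b)
  have n0: "0 < n" using len_b bv by auto
  have "ws ! 0 = u"
    using gram_schmidt_hd[OF u, of vs, folded bv ws_def] n0 ws(3)
    by (metis hd_conv_nth list.size(3) not_less0)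
  then have "col (mat_of_cols n (map normalize_vec ws)) 0 = u"
    using mat_of_cols_normalize_orthogonal(3)[OF ws n0] u u1 by (simp add: normalize_vec_def)
  then show ?thesis using mat_of_cols_normalize_orthogonal(1,2)[OF ws] by blast
qed

lemma orthogonal_similar_first_col:
  fixes S U :: "real mat"
  assumes S: "S \<in> carrier_mat n n" and U: "U \<in> carrier_mat n n"
    and orth: "transpose_mat U * U = 1\<^sub>m n" and ev: "S *\<^sub>v col U 0 = \<mu> \<cdot>\<^sub>v col U 0"
    and i: "i < n"
  shows "(transpose_mat U * S * U) $$ (i, 0) = (if i = 0 then \<mu> else 0)"
proof -
  have n0: "0 < n" using i by simp
  have "(transpose_mat U * S * U) $$ (i, 0) = col U i \<bullet> (S *\<^sub>v col U 0)"
    using U S i n0 by (simp add: assoc_mult_mat[of _ n n _ n _ n] col_mult2)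
  also have "\<dots> = \<mu> * (col U i \<bullet> col U 0)" using ev U i by simp
  also have "col U i \<bullet> col U 0 = (transpose_mat U * U) $$ (i, 0)" using U i n0 by simp
  finally show ?thesis using orth i n0 by simp
qed

lemma symmetric_first_col_four_block:
  fixes M :: "real mat"
  assumes M: "M \<in> carrier_mat (Suc m) (Suc m)" and sym: "transpose_mat M = M"
    and col0: "\<And>i. i < Suc m \<Longrightarrow> M $$ (i, 0) = (if i = 0 then \<mu> else 0)"
  shows "M = four_block_mat (mat 1 1 (\<lambda>_. \<mu>)) (0\<^sub>m 1 m) (0\<^sub>m m 1)
    (mat m m (\<lambda>(i,j). M $$ (Suc i, Suc j)))"
proof (rule eq_matI)
  fix i j assume "i < dim_row (four_block_mat (mat 1 1 (\<lambda>_. \<mu>)) (0\<^sub>m 1 m) (0\<^sub>m m 1)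
    (mat m m (\<lambda>(i,j). M $$ (Suc i, Suc j))))"
    "j < dim_col (four_block_mat (mat 1 1 (\<lambda>_. \<mu>)) (0\<^sub>m 1 m) (0\<^sub>m m 1)
    (mat m m (\<lambda>(i,j). M $$ (Suc i, Suc j))))"
  then have i: "i < Suc m" and j: "j < Suc m" by auto
  have row0: "M $$ (0, j) = (if j = 0 then \<mu> else 0)"
    using col0[OF j] sym M j by (metis carrier_matD index_transpose_mat(1) zero_less_Suc)
  show "M $$ (i, j) = four_block_mat (mat 1 1 (\<lambda>_. \<mu>)) (0\<^sub>m 1 m) (0\<^sub>m m 1)
    (mat m m (\<lambda>(i,j). M $$ (Suc i, Suc j))) $$ (i, j)"
    using i j col0[OF i] row0 by (cases i; cases j) auto
qed (use M in auto)

lemma diagm_Suc_four_block: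
  "diagm (Suc m) (case_nat \<mu> lam) = four_block_mat (mat 1 1 (\<lambda>_. \<mu>)) (0\<^sub>m 1 m) (0\<^sub>m m 1) (diagm m lam)"
  by (rule eq_matI) (auto simp: diagm_def split: nat.split)

lemma mult_block_diag_mat:
  assumes "A1 \<in> carrier_mat k k" "D1 \<in> carrier_mat m m" "A2 \<in> carrier_mat k k" "D2 \<in> carrier_mat m m"
  shows "four_block_mat A1 (0\<^sub>m k m) (0\<^sub>m m k) D1 * four_block_mat A2 (0\<^sub>m k m) (0\<^sub>m m k) D2
    = four_block_mat (A1 * A2) (0\<^sub>m k m) (0\<^sub>m m k) (D1 * D2)"
  using assms by (simp add: mult_four_block_mat[of _ k k _ m _ m _ _ k _ m])

lemma orthogonal_block_diag_extend:
  fixes S U V' :: "real mat"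
  assumes S: "S \<in> carrier_mat (Suc m) (Suc m)"
    and U: "U \<in> carrier_mat (Suc m) (Suc m)" "transpose_mat U * U = 1\<^sub>m (Suc m)"
    and V': "V' \<in> carrier_mat m m" "transpose_mat V' * V' = 1\<^sub>m m"
    and block: "transpose_mat U * S * U
      = four_block_mat (mat 1 1 (\<lambda>_. \<mu>)) (0\<^sub>m 1 m) (0\<^sub>m m 1) (V' * diagm m lam' * transpose_mat V')"
  shows "\<exists>V lam. V \<in> carrier_mat (Suc m) (Suc m) \<and> transpose_mat V * V = 1\<^sub>m (Suc m)
      \<and> S = V * diagm (Suc m) lam * transpose_mat V"
proof -
  define E where "E = four_block_mat (1\<^sub>m 1) (0\<^sub>m 1 m) (0\<^sub>m m 1) V'"
  define lam where "lam = case_nat \<mu> lam'"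
  define V where "V = U * E"
  note assoc = assoc_mult_mat[of _ "Suc m" "Suc m" _ "Suc m" _ "Suc m"]
  have E: "E \<in> carrier_mat (Suc m) (Suc m)"
    using four_block_carrier_mat[of "1\<^sub>m 1" 1 1 V' m m] V' by (simp add: E_def)
  have Et: "transpose_mat E = four_block_mat (1\<^sub>m 1) (0\<^sub>m 1 m) (0\<^sub>m m 1) (transpose_mat V')"
    unfolding E_def
    using transpose_four_block_mat[of "1\<^sub>m 1" 1 1 "0\<^sub>m 1 m" m "0\<^sub>m m 1" m V'] V'(1) by simp
  have EtE: "transpose_mat E * E = 1\<^sub>m (Suc m)"
    unfolding Et unfolding E_def using V' by (simp add: mult_block_diag_mat)
  have EDE: "E * diagm (Suc m) lam * transpose_mat E = transpose_mat U * S * U"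
    unfolding Et lam_def diagm_Suc_four_block block unfolding E_def using V'
    by (simp add: mult_block_diag_mat diagm_def)
  have UUt: "U * transpose_mat U = 1\<^sub>m (Suc m)"
    using mat_mult_left_right_inverse[OF _ U] U(1) by simp
  have D: "diagm (Suc m) lam \<in> carrier_mat (Suc m) (Suc m)" by (simp add: diagm_def)
  have Vt: "transpose_mat V = transpose_mat E * transpose_mat U"
    using U E by (simp add: V_def transpose_mult)
  have "transpose_mat V * V = transpose_mat E * ((transpose_mat U * U) * E)"
    unfolding Vt unfolding V_def using U(1) E by (simp add: assoc)
  then have "transpose_mat V * V = 1\<^sub>m (Suc m)" using U(2) EtE E by simp
  moreover have "V * diagm (Suc m) lam * transpose_mat V
      = U * (E * diagm (Suc m) lam * transpose_mat E) * transpose_mat U"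
    unfolding Vt unfolding V_def using U(1) E D by (simp add: assoc)
  then have "V * diagm (Suc m) lam * transpose_mat V = (U * transpose_mat U) * S * (U * transpose_mat U)"
    unfolding EDE using U(1) S by (simp add: assoc)
  moreover have "V \<in> carrier_mat (Suc m) (Suc m)" using U E by (simp add: V_def)
  ultimately show ?thesis using UUt S by auto
qed

theorem real_symmetric_spectral_decomposition:
  fixes S :: "real mat"
  assumes "S \<in> carrier_mat n n" and "transpose_mat S = S"
  shows "\<exists>V lam. V \<in> carrier_mat n n \<and> transpose_mat V * V = 1\<^sub>m n
      \<and> S = V * diagm n lam * transpose_mat V"
  using assms
proof (induction n arbitrary: S)
  case 0
  then have "S = 1\<^sub>m 0 * diagm 0 (\<lambda>_. 0) * transpose_mat (1\<^sub>m 0)"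
    by (intro eq_matI) (auto simp: diagm_def)
  then show ?case by (metis one_carrier_mat transpose_one right_mult_one_mat)
next
  case (Suc m S)
  have S: "S \<in> carrier_mat (Suc m) (Suc m)" and sym: "transpose_mat S = S" by fact+
  obtain u :: "real vec" and \<mu> where u: "u \<in> carrier_vec (Suc m)" "u \<bullet> u = 1" "S *\<^sub>v u = \<mu> \<cdot>\<^sub>v u"
    using real_symmetric_eigenvector[OF S sym] by auto
  obtain U where U: "U \<in> carrier_mat (Suc m) (Suc m)" "transpose_mat U * U = 1\<^sub>m (Suc m)" "col U 0 = u"
    using orthogonal_mat_extending_unit_vec[OF u(1,2)] by blast
  define M where "M = transpose_mat U * S * U"
  have M: "M \<in> carrier_mat (Suc m) (Suc m)" using U S by (simp add: M_def)
  have symM: "transpose_mat M = M"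
    using U S sym unfolding M_def
    by (simp add: transpose_mult[of _ "Suc m" "Suc m" _ "Suc m"]
        assoc_mult_mat[of _ "Suc m" "Suc m" _ "Suc m" _ "Suc m"])
  define S' where "S' = mat m m (\<lambda>(i,j). M $$ (Suc i, Suc j))"
  have M_block: "M = four_block_mat (mat 1 1 (\<lambda>_. \<mu>)) (0\<^sub>m 1 m) (0\<^sub>m m 1) S'"
    unfolding S'_def using orthogonal_similar_first_col[OF S U(1,2)] u(3) U(3)
    by (intro symmetric_first_col_four_block[OF M symM]) (simp add: M_def)
  have "S' \<in> carrier_mat m m" "transpose_mat S' = S'"
    using symM M by (auto simp: S'_def intro!: eq_matI)
      (metis carrier_matD index_transpose_mat(1) Suc_less_eq)
  then obtain V' lam' where V': "V' \<in> carrier_mat m m" "transpose_mat V' * V' = 1\<^sub>m m"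
    "S' = V' * diagm m lam' * transpose_mat V'" using Suc.IH by blast
  show ?case
    using orthogonal_block_diag_extend[OF S U(1,2) V'(1,2)] M_block V'(3) by (simp add: M_def)
qed

section \<open>Stability of the graph scattering transform\<close>

lemma matfun_carrier:
  assumes S: "S \<in> carrier_mat n n" and sym: "transpose_mat S = S"
  shows "matfun f S \<in> carrier_mat n n"
proof -
  let ?P = "\<lambda>M. \<exists>V lam. V \<in> carrier_mat n n \<and> transpose_mat V * V = 1\<^sub>m n
      \<and> S = V * diagm n lam * transpose_mat V \<and> M = V * diagm n (\<lambda>k. f (lam k)) * transpose_mat V"
  have "\<exists>M. ?P M" using real_symmetric_spectral_decomposition[OF S sym] by blast
  then have "?P (SOME M. ?P M)" by (rule someI_ex)
  then have "?P (matfun f S)" using S by (simp add: matfun_def)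
  then show ?thesis by (auto simp: diagm_def)
qed

lemma Phi_path_Nil [simp]: "Phi_path h S x [] = x"
  by (simp add: Phi_path_def)

lemma Phi_path_Cons [simp]:
  "Phi_path h S x (j # p) = Phi_path h S (map_vec abs (wavelet h j S *\<^sub>v x)) p"
  by (simp add: Phi_path_def)

lemma length_gst_paths: "length (gst_paths J L) = (\<Sum>k<L. J ^ k)"
proof -
  have "length (gst_paths J L) = sum_list (map (\<lambda>l. J ^ l) [0..<L])"
    unfolding gst_paths_def by (simp add: length_concat length_n_lists o_def del: upt_Suc)
  then show ?thesis by (simp add: sum_set_upt_conv_sum_list_nat[symmetric] lessThan_atLeast0)
qed

lemma gst_carrier [simp]: "gst h J L S x \<in> carrier_vec (\<Sum>k<L. J ^ k)"
  by (rule carrier_vecI) (simp add: gst_def length_gst_paths)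

lemma set_gst_paths: "p \<in> set (gst_paths J L) \<Longrightarrow> set p \<subseteq> {1..J}"
  unfolding gst_paths_def by (auto simp: set_n_lists)

lemma sum_even_powers_nonneg: "0 \<le> (\<Sum>k<L. (B :: real) ^ (2 * k))"
  by (simp add: power_mult sum_nonneg)

lemma vec_of_list_dist_square:
  fixes f g :: "'a \<Rightarrow> real"
  shows "(vec_of_list (map f xs) - vec_of_list (map g xs))
      \<bullet> (vec_of_list (map f xs) - vec_of_list (map g xs))
    = sum_list (map (\<lambda>p. (f p - g p)\<^sup>2) xs)"
  by (simp add: scalar_prod_def vec_of_list_index power2_eq_square sum_list_sum_nth atLeast0LessThan)

lemma sum_list_map_concat: "sum_list (map f (concat xss)) = sum_list (map (\<lambda>xs. sum_list (map f xs)) xss)"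
  by (induction xss) auto

lemma sum_list_map_swap:
  fixes f :: "'a \<Rightarrow> 'b \<Rightarrow> 'c::comm_monoid_add"
  shows "sum_list (map (\<lambda>a. sum_list (map (f a) ys)) xs)
    = sum_list (map (\<lambda>b. sum_list (map (\<lambda>a. f a b) xs)) ys)"
proof (induction xs)
  case (Cons a xs)
  then show ?case by (simp add: sum_list_addf)
qed simp

lemma map_vec_abs_dist_le:
  fixes a b :: "real vec"
  assumes "dim_vec a = dim_vec b"
  shows "(map_vec abs a - map_vec abs b) \<bullet> (map_vec abs a - map_vec abs b) \<le> (a - b) \<bullet> (a - b)"
proof -
  have abs_dist: "(\<bar>x\<bar> - \<bar>y\<bar>) * (\<bar>x\<bar> - \<bar>y\<bar>) \<le> (x - y) * (x - y)" for x y :: real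
    using abs_triangle_ineq3[of x y] abs_le_square_iff[of "\<bar>x\<bar> - \<bar>y\<bar>" "x - y"]
    by (simp add: power2_eq_square)
  show ?thesis using assms unfolding scalar_prod_def by simp (rule sum_mono, rule abs_dist)
qed

lemma mean_diff_square_le:
  fixes a b :: "real vec"
  assumes a: "a \<in> carrier_vec g" and b: "b \<in> carrier_vec g"
  shows "((\<Sum>k<g. a $ k) / g - (\<Sum>k<g. b $ k) / g)\<^sup>2 \<le> (a - b) \<bullet> (a - b) / g"
proof -
  have "(\<Sum>k<g. a $ k) / g - (\<Sum>k<g. b $ k) / g = (\<Sum>k<g. a $ k - b $ k) / g"
    by (simp add: sum_subtractf diff_divide_distrib)
  then have "((\<Sum>k<g. a $ k) / g - (\<Sum>k<g. b $ k) / g)\<^sup>2 = (\<Sum>k<g. a $ k - b $ k)\<^sup>2 / (real g)\<^sup>2"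
    by (simp add: power_divide)
  also have "\<dots> \<le> ((\<Sum>k<g. (a $ k - b $ k)\<^sup>2) * g) / (real g)\<^sup>2"
    using sum_squared_le_sum_of_squares[of "\<lambda>k. a $ k - b $ k" "{..<g}"]
    by (intro divide_right_mono) auto
  also have "\<dots> = (\<Sum>k<g. (a $ k - b $ k)\<^sup>2) / g" by (simp add: power2_eq_square)
  also have "(\<Sum>k<g. (a $ k - b $ k)\<^sup>2) = (a - b) \<bullet> (a - b)"
    using a b by (auto simp: scalar_prod_def power2_eq_square lessThan_atLeast0 intro!: sum.cong)
  finally show ?thesis .
qed

text \<open>Only the upper frame bound enters: every layer of the scattering transform is
  \<open>B\<close>-Lipschitz in energy because \<open>\<rho> = \<bar>\<cdot>\<bar>\<close> is a contraction.\<close>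
locale upper_frame =
  fixes h :: "nat \<Rightarrow> real \<Rightarrow> real" and J :: nat and S :: "real mat" and g :: nat and B :: real
  assumes wavelet_carrier: "j \<in> {1..J} \<Longrightarrow> wavelet h j S \<in> carrier_mat g g"
    and upper_frame_bound: "v \<in> carrier_vec g \<Longrightarrow>
      (\<Sum>j=1..J. (vnorm (wavelet h j S *\<^sub>v v))\<^sup>2) \<le> B\<^sup>2 * (vnorm v)\<^sup>2"
begin

lemma Phi_path_carrier:
  "set p \<subseteq> {1..J} \<Longrightarrow> x \<in> carrier_vec g \<Longrightarrow> Phi_path h S x p \<in> carrier_vec g"
proof (induction p arbitrary: x)
  case (Cons j p)
  then show ?case using wavelet_carrier[of j] by simp
qed simp

lemma Phi_path_zero: "set p \<subseteq> {1..J} \<Longrightarrow> Phi_path h S (0\<^sub>v g) p = 0\<^sub>v g"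
proof (induction p)
  case (Cons j p)
  have "map_vec abs (wavelet h j S *\<^sub>v 0\<^sub>v g) = 0\<^sub>v g"
    using wavelet_carrier[of j] Cons.prems by (auto intro!: eq_vecI)
  then show ?case using Cons by simp
qed simp

lemma Phi_paths_energy_diff:
  assumes "u \<in> carrier_vec g" "v \<in> carrier_vec g"
  shows "sum_list (map (\<lambda>p. (Phi_path h S u p - Phi_path h S v p)
      \<bullet> (Phi_path h S u p - Phi_path h S v p))
       (List.n_lists l [1..<Suc J])) \<le> B ^ (2 * l) * ((u - v) \<bullet> (u - v))"
  using assms
proof (induction l arbitrary: u v)
  case (Suc l u v)
  let ?W = "\<lambda>j. wavelet h j S"
  let ?a = "\<lambda>j x. map_vec abs (?W j *\<^sub>v x)"
  let ?E = "\<lambda>j. sum_list (map (\<lambda>p. (Phi_path h S (?a j u) p - Phi_path h S (?a j v) p)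
      \<bullet> (Phi_path h S (?a j u) p - Phi_path h S (?a j v) p)) (List.n_lists l [1..<Suc J]))"
  have B2: "0 \<le> B ^ (2 * l)" by (simp add: power_mult)
  have layer: "?E j \<le> B ^ (2 * l) * ((?W j *\<^sub>v (u - v)) \<bullet> (?W j *\<^sub>v (u - v)))"
    if "j \<in> set [1..<Suc J]" for j
  proof -
    have W: "?W j \<in> carrier_mat g g" using that wavelet_carrier by auto
    have "?E j \<le> B ^ (2 * l) * ((?a j u - ?a j v) \<bullet> (?a j u - ?a j v))"
      using Suc W by auto
    also have "\<dots> \<le> B ^ (2 * l) * ((?W j *\<^sub>v u - ?W j *\<^sub>v v) \<bullet> (?W j *\<^sub>v u - ?W j *\<^sub>v v))"
      using W Suc.prems by (intro mult_left_mono[OF map_vec_abs_dist_le B2]) auto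
    finally show ?thesis using W Suc.prems by (simp add: mult_minus_distrib_mat_vec)
  qed
  have "sum_list (map (\<lambda>p. (Phi_path h S u p - Phi_path h S v p) \<bullet> (Phi_path h S u p - Phi_path h S v p))
      (List.n_lists (Suc l) [1..<Suc J])) = sum_list (map ?E [1..<Suc J])"
    by (simp add: sum_list_map_concat o_def del: upt_Suc) (rule sum_list_map_swap)
  also have "\<dots> \<le> sum_list (map (\<lambda>j. B ^ (2 * l) * ((?W j *\<^sub>v (u - v)) \<bullet> (?W j *\<^sub>v (u - v)))) [1..<Suc J])"
    by (rule sum_list_mono[OF layer])
  also have "\<dots> = B ^ (2 * l) * (\<Sum>j=1..J. (vnorm (?W j *\<^sub>v (u - v)))\<^sup>2)"
    by (simp add: sum_list_const_mult vnorm_square sum_set_upt_conv_sum_list_nat[symmetric]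
        atLeastLessThanSuc_atLeastAtMost del: upt_Suc)
  also have "\<dots> \<le> B ^ (2 * l) * (B\<^sup>2 * (vnorm (u - v))\<^sup>2)"
    using Suc.prems by (intro mult_left_mono[OF upper_frame_bound B2]) auto
  also have "\<dots> = B ^ (2 * Suc l) * ((u - v) \<bullet> (u - v))"
    unfolding vnorm_square mult_Suc_right power_add by (simp add: mult_ac)
  finally show ?case .
qed simp

lemma gst_energy_diff:
  assumes u: "u \<in> carrier_vec g" and v: "v \<in> carrier_vec g"
  shows "(gst h J L S u - gst h J L S v) \<bullet> (gst h J L S u - gst h J L S v)
     \<le> (\<Sum>k<L. B ^ (2 * k)) * ((u - v) \<bullet> (u - v)) / g"
proof -
  let ?d = "\<lambda>p. Phi_path h S u p - Phi_path h S v p"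
  have path: "(phi_path h S u p - phi_path h S v p)\<^sup>2 \<le> ?d p \<bullet> ?d p / g"
    if "p \<in> set (List.n_lists l [1..<Suc J])" for p l
  proof -
    have "set p \<subseteq> {1..J}" using that by (auto simp: set_n_lists)
    then show ?thesis
      using mean_diff_square_le[OF Phi_path_carrier Phi_path_carrier] u v by (simp add: phi_path_def)
  qed
  have level: "sum_list (map (\<lambda>p. (phi_path h S u p - phi_path h S v p)\<^sup>2) (List.n_lists l [1..<Suc J]))
      \<le> B ^ (2 * l) * ((u - v) \<bullet> (u - v)) / g" for l
  proof -
    have "sum_list (map (\<lambda>p. (phi_path h S u p - phi_path h S v p)\<^sup>2) (List.n_lists l [1..<Suc J]))
        \<le> sum_list (map (\<lambda>p. ?d p \<bullet> ?d p / g) (List.n_lists l [1..<Suc J]))"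
      by (rule sum_list_mono[OF path])
    also have "\<dots> = sum_list (map (\<lambda>p. ?d p \<bullet> ?d p) (List.n_lists l [1..<Suc J])) / g"
      by (simp add: divide_inverse sum_list_mult_const)
    also have "\<dots> \<le> B ^ (2 * l) * ((u - v) \<bullet> (u - v)) / g"
      by (rule divide_right_mono[OF Phi_paths_energy_diff[OF u v]]) simp
    finally show ?thesis .
  qed
  have "(gst h J L S u - gst h J L S v) \<bullet> (gst h J L S u - gst h J L S v)
      = sum_list (map (\<lambda>l. sum_list (map (\<lambda>p. (phi_path h S u p - phi_path h S v p)\<^sup>2)
          (List.n_lists l [1..<Suc J]))) [0..<L])"
    unfolding gst_def vec_of_list_dist_square unfolding gst_paths_def
    by (simp add: sum_list_map_concat o_def del: upt_Suc)
  also have "\<dots> \<le> sum_list (map (\<lambda>l. B ^ (2 * l) * ((u - v) \<bullet> (u - v)) / g) [0..<L])"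
    by (rule sum_list_mono[OF level])
  also have "\<dots> = (\<Sum>k<L. B ^ (2 * k)) * ((u - v) \<bullet> (u - v)) / g"
    by (simp add: sum_set_upt_conv_sum_list_nat[symmetric] lessThan_atLeast0
        sum_divide_distrib[symmetric] sum_distrib_right)
  finally show ?thesis .
qed

lemma gst_lipschitz:
  assumes "u \<in> carrier_vec g" "v \<in> carrier_vec g"
  shows "vnorm (gst h J L S u - gst h J L S v) \<le> sqrt (\<Sum>k<L. B ^ (2 * k)) * vnorm (u - v) / sqrt g"
  using vnorm_le_sqrt[OF gst_energy_diff[OF assms]]
  by (simp add: vnorm_def real_sqrt_mult real_sqrt_divide)

lemma gst_zero: "gst h J L S (0\<^sub>v g) = 0\<^sub>v (\<Sum>k<L. J ^ k)"
proof (rule eq_vecI)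
  fix i assume "i < dim_vec (0\<^sub>v (\<Sum>k<L. J ^ k) :: real vec)"
  then have i: "i < length (gst_paths J L)" by (simp add: length_gst_paths)
  then have "set (gst_paths J L ! i) \<subseteq> {1..J}" by (intro set_gst_paths[of _ J L] nth_mem)
  then show "gst h J L S (0\<^sub>v g) $ i = 0\<^sub>v (\<Sum>k<L. J ^ k) $ i"
    using i Phi_path_zero by (simp add: gst_def vec_of_list_index phi_path_def length_gst_paths)
qed (simp add: length_gst_paths gst_def)

lemma gst_norm_le:
  assumes u: "u \<in> carrier_vec g" and g: "0 < g" and bounded: "\<And>k. k < g \<Longrightarrow> \<bar>u $ k\<bar> \<le> 1"
  shows "vnorm (gst h J L S u) \<le> sqrt (\<Sum>k<L. B ^ (2 * k))"
proof -
  have "u \<bullet> u = (\<Sum>k<g. u $ k * u $ k)" using u by (simp add: scalar_prod_def lessThan_atLeast0)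
  also have "\<dots> \<le> (\<Sum>k<g. 1)"
    using bounded by (intro sum_mono) (simp add: abs_le_square_iff[of _ 1, simplified] power2_eq_square)
  finally have "vnorm u \<le> sqrt g" by (simp add: vnorm_le_sqrt)
  have "vnorm (gst h J L S u) = vnorm (gst h J L S u - gst h J L S (0\<^sub>v g))"
    by (simp add: gst_zero)
  also have "\<dots> \<le> sqrt (\<Sum>k<L. B ^ (2 * k)) * vnorm u / sqrt g"
    using gst_lipschitz[OF u zero_carrier_vec] u by simp
  also have "\<dots> \<le> sqrt (\<Sum>k<L. B ^ (2 * k)) * sqrt g / sqrt g"
    using \<open>vnorm u \<le> sqrt g\<close>
    by (intro divide_right_mono mult_left_mono) (auto simp: sum_even_powers_nonneg)
  finally show ?thesis using g by simp
qed

end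

lemma remove_last_feature:
  fixes u u' :: "real vec"
  assumes u: "u \<in> carrier_vec g" and g: "0 < g" and bounded: "\<And>k. k < g \<Longrightarrow> \<bar>u $ k\<bar> \<le> 1"
  defines "u' \<equiv> vec g (\<lambda>k. if k = g - 1 then 0 else u $ k)"
  shows "u' \<in> carrier_vec g" "\<And>k. k < g \<Longrightarrow> \<bar>u' $ k\<bar> \<le> 1" "vnorm (u - u') \<le> 1"
proof -
  show "u' \<in> carrier_vec g" "\<And>k. k < g \<Longrightarrow> \<bar>u' $ k\<bar> \<le> 1"
    using bounded by (auto simp: u'_def)
  have "u - u' = vec g (\<lambda>k. if k = g - 1 then u $ k else 0)"
    using u by (auto simp: u'_def intro!: eq_vecI)
  then have "(u - u') \<bullet> (u - u') = u $ (g - 1) * u $ (g - 1)"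
    using g by (simp add: scalar_prod_def if_distrib cong: if_cong)
  also have "\<dots> \<le> 1"
    using bounded[of "g - 1"] g by (simp add: abs_le_square_iff[of _ 1, simplified] power2_eq_square)
  finally show "vnorm (u - u') \<le> 1" using vnorm_le_sqrt by fastforce
qed

section \<open>The regularised empirical risk\<close>

lemma convex_deriv_mono:
  fixes f f' :: "real \<Rightarrow> real"
  assumes convex: "convex_on UNIV f" and deriv: "\<And>s. (f has_real_derivative f' s) (at s)"
    and "x \<le> y"
  shows "f' x \<le> f' y"
proof -
  have "f' x * (y - x) \<le> f y - f x" "f' y * (x - y) \<le> f x - f y"
    using convex_on_imp_above_tangent[OF convex connected_UNIV, of _ _ "f' _"] deriv by auto
  then have "0 \<le> (f' y - f' x) * (y - x)" by (simp add: algebra_simps)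
  then show ?thesis using \<open>x \<le> y\<close> by (cases "x = y") (auto simp: zero_le_mult_iff)
qed

lemma convex_second_deriv_nonneg:
  fixes f f' f'' :: "real \<Rightarrow> real"
  assumes convex: "convex_on UNIV f" and deriv: "\<And>s. (f has_real_derivative f' s) (at s)"
    and deriv2: "\<And>s. (f' has_real_derivative f'' s) (at s)"
  shows "0 \<le> f'' x"
proof (rule ccontr)
  assume "\<not> 0 \<le> f'' x"
  then obtain e where "0 < e" "\<forall>h>0. h < e \<longrightarrow> f' (x + h) < f' x"
    using DERIV_neg_dec_right[OF deriv2, of x] by force
  then have "f' (x + e / 2) < f' x" by simp
  moreover have "f' x \<le> f' (x + e / 2)"
    using convex_deriv_mono[OF convex deriv] \<open>0 < e\<close> by simp
  ultimately show False by simp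
qed

lemma lipschitz_deriv_taylor_remainder:
  fixes f f' :: "real \<Rightarrow> real"
  assumes deriv: "\<And>s. (f has_real_derivative f' s) (at s)"
    and lipschitz: "\<And>s t. \<bar>f' s - f' t\<bar> \<le> \<gamma> * \<bar>s - t\<bar>"
  shows "\<bar>f b - f a - f' a * (b - a)\<bar> \<le> \<gamma> * (b - a)\<^sup>2"
proof -
  have "0 \<le> \<gamma>" using lipschitz[of 1 0] by simp
  obtain z where z: "f b - f a = (b - a) * f' z" "\<bar>z - a\<bar> \<le> \<bar>b - a\<bar>"
  proof (cases a b rule: linorder_cases)
    case less
    then show ?thesis using MVT2[OF less, of f f'] deriv that by force
  next
    case greater
    then obtain z where "b < z" "z < a" "f a - f b = (a - b) * f' z"
      using MVT2[OF greater, of f f'] deriv by blast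
    then show ?thesis using that[of z] by (simp add: algebra_simps)
  qed (use that in auto)
  have "\<bar>f b - f a - f' a * (b - a)\<bar> = \<bar>f' z - f' a\<bar> * \<bar>b - a\<bar>"
    using z(1) by (simp add: algebra_simps flip: abs_mult)
  also have "\<dots> \<le> \<gamma> * \<bar>b - a\<bar> * \<bar>b - a\<bar>"
    using lipschitz[of z a] z(2) \<open>0 \<le> \<gamma>\<close>
    by (intro mult_right_mono) (auto intro: order_trans mult_left_mono)
  finally show ?thesis by (simp add: power2_eq_square)
qed

lemma dim_gradL [simp]: "dim_vec (gradL l' lam n Z y w) = dim_vec w"
  by (simp add: gradL_def)

lemma gradL_carrier [simp]: "w \<in> carrier_vec d \<Longrightarrow> gradL l' lam n Z y w \<in> carrier_vec d"
  by (rule carrier_vecI) simp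

lemma hessL_carrier [simp]: "w \<in> carrier_vec d \<Longrightarrow> hessL l'' lam n Z y w \<in> carrier_mat d d"
  by (simp add: hessL_def)

lemma gradL_index:
  "k < dim_vec w \<Longrightarrow>
    gradL l' lam n Z y w $ k = (\<Sum>i<n. l' (w \<bullet> Z i) (y i) * Z i $ k) + n * lam * w $ k"
  by (simp add: gradL_def sum.distrib)

lemma lossL_partial_deriv:
  fixes Z :: "nat \<Rightarrow> real vec"
  assumes Z: "\<And>i. i < n \<Longrightarrow> Z i \<in> carrier_vec d"
    and l_deriv: "\<And>s c. ((\<lambda>t. l t c) has_real_derivative l' s c) (at s)"
    and w: "w \<in> carrier_vec d" and k: "k < d"
  shows "((\<lambda>t. lossL l lam n Z y (w + t \<cdot>\<^sub>v unit_vec d k)) has_real_derivative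
    gradL l' lam n Z y w $ k) (at 0)"
proof -
  let ?e = "unit_vec d k :: real vec"
  have e: "?e \<in> carrier_vec d" by simp
  have "(w + t \<cdot>\<^sub>v ?e) \<bullet> Z i = w \<bullet> Z i + t * Z i $ k" if "i < n" for i t
    using Z[OF that] w k by (simp add: add_scalar_prod_distrib[of _ d])
  moreover have "(vnorm (w + t \<cdot>\<^sub>v ?e))\<^sup>2 = w \<bullet> w + 2 * t * w $ k + t\<^sup>2" for t
    unfolding vnorm_square using w e k
    by (simp add: add_scalar_prod_distrib[of _ d] scalar_prod_add_distrib[of _ d]
        comm_scalar_prod[of w d ?e] algebra_simps power2_eq_square)
  ultimately have loss: "lossL l lam n Z y (w + t \<cdot>\<^sub>v ?e)
      = (\<Sum>i<n. l (w \<bullet> Z i + t * Z i $ k) (y i) + lam / 2 * (w \<bullet> w + 2 * t * w $ k + t\<^sup>2))" for t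
    unfolding lossL_def by (auto intro!: sum.cong)
  have "((\<lambda>t. \<Sum>i<n. l (w \<bullet> Z i + t * Z i $ k) (y i) + lam / 2 * (w \<bullet> w + 2 * t * w $ k + t\<^sup>2))
      has_real_derivative (\<Sum>i<n. l' (w \<bullet> Z i) (y i) * Z i $ k + lam * w $ k)) (at 0)"
  proof (rule DERIV_sum)
    fix i
    have "((\<lambda>t. l (w \<bullet> Z i + t * Z i $ k) (y i)) has_real_derivative
        l' (w \<bullet> Z i + 0 * Z i $ k) (y i) * (0 + 1 * Z i $ k)) (at 0)"
      by (rule DERIV_chain2[OF l_deriv]) (auto intro!: derivative_eq_intros)
    then show "((\<lambda>t. l (w \<bullet> Z i + t * Z i $ k) (y i) + lam / 2 * (w \<bullet> w + 2 * t * w $ k + t\<^sup>2))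
        has_real_derivative l' (w \<bullet> Z i) (y i) * Z i $ k + lam * w $ k) (at 0)"
      by (auto intro!: derivative_eq_intros)
  qed
  then show ?thesis using w k by (simp add: loss gradL_def)
qed

lemma gradL_zero_at_minimum:
  fixes Z :: "nat \<Rightarrow> real vec"
  assumes Z: "\<And>i. i < n \<Longrightarrow> Z i \<in> carrier_vec d"
    and l_deriv: "\<And>s c. ((\<lambda>t. l t c) has_real_derivative l' s c) (at s)"
    and w: "w \<in> carrier_vec d"
    and min: "\<And>v. v \<in> carrier_vec d \<Longrightarrow> lossL l lam n Z y w \<le> lossL l lam n Z y v"
  shows "gradL l' lam n Z y w = 0\<^sub>v d"
proof (rule eq_vecI)
  fix k assume "k < dim_vec (0\<^sub>v d :: real vec)"
  then have k: "k < d" by simp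
  have "w + 0 \<cdot>\<^sub>v unit_vec d k = w" using w by (intro eq_vecI) auto
  then have "lossL l lam n Z y (w + 0 \<cdot>\<^sub>v unit_vec d k) \<le> lossL l lam n Z y (w + t \<cdot>\<^sub>v unit_vec d k)" for t
    using min[of "w + t \<cdot>\<^sub>v unit_vec d k"] w by simp
  then have "gradL l' lam n Z y w $ k = 0"
    by (intro DERIV_local_min[OF lossL_partial_deriv[of n Z d, OF Z l_deriv w k], of 1]) auto
  then show "gradL l' lam n Z y w $ k = 0\<^sub>v d $ k" using k by simp
qed (use w in simp)

text \<open>At a critical point \<open>n \<lambda> w = - \<Sum>\<^sub>i \<ell>'(w\<^sup>T z\<^sub>i) z\<^sub>i\<close>.\<close>
lemma vnorm_critical_point_le:
  fixes Z :: "nat \<Rightarrow> real vec"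
  assumes Z: "\<And>i. i < n \<Longrightarrow> Z i \<in> carrier_vec d" and n: "0 < n" and lam: "0 < lam"
    and w: "w \<in> carrier_vec d" and crit: "gradL l' lam n Z y w = 0\<^sub>v d"
    and C1: "\<And>i. i < n \<Longrightarrow> vnorm (l' (w \<bullet> Z i) (y i) \<cdot>\<^sub>v Z i) \<le> C1"
  shows "vnorm w \<le> C1 / lam"
proof -
  have "vec d (\<lambda>k. \<Sum>i<n. l' (w \<bullet> Z i) (y i) * Z i $ k) = (- (n * lam)) \<cdot>\<^sub>v w"
  proof (rule eq_vecI)
    fix k assume "k < dim_vec ((- (n * lam)) \<cdot>\<^sub>v w)"
    then have "k < d" using w by simp
    then show "vec d (\<lambda>k. \<Sum>i<n. l' (w \<bullet> Z i) (y i) * Z i $ k) $ k = ((- (n * lam)) \<cdot>\<^sub>v w) $ k"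
      using arg_cong[OF crit, of "\<lambda>v. v $ k"] w by (simp add: gradL_index)
  qed (use w in simp)
  then have "n * lam * vnorm w \<le> (\<Sum>i<n. \<bar>l' (w \<bullet> Z i) (y i)\<bar> * vnorm (Z i))"
    using vnorm_lincomb_le[of "{..<n}" Z d "\<lambda>i. l' (w \<bullet> Z i) (y i)"] Z lam
    by (simp add: vnorm_smult)
  also have "\<dots> \<le> n * C1"
    using sum_mono[of "{..<n}" _ "\<lambda>_. C1"] C1 by (simp add: vnorm_smult)
  finally show ?thesis using n lam by (simp add: field_simps)
qed

lemma hessL_mult_vec:
  fixes Z :: "nat \<Rightarrow> real vec"
  assumes Z: "\<And>i. i < n \<Longrightarrow> Z i \<in> carrier_vec d" and w: "w \<in> carrier_vec d" and v: "v \<in> carrier_vec d"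
  shows "hessL l'' lam n Z y w *\<^sub>v v
     = vec d (\<lambda>k. (\<Sum>i<n. l'' (w \<bullet> Z i) (y i) * (Z i \<bullet> v) * Z i $ k) + n * lam * v $ k)"
proof (rule eq_vecI)
  fix k
  assume "k < dim_vec (vec d (\<lambda>k. (\<Sum>i<n. l'' (w \<bullet> Z i) (y i) * (Z i \<bullet> v) * Z i $ k) + n * lam * v $ k))"
  then have k: "k < d" by simp
  define c where "c i = l'' (w \<bullet> Z i) (y i)" for i
  have "(hessL l'' lam n Z y w *\<^sub>v v) $ k = (\<Sum>m<d. hessL l'' lam n Z y w $$ (k,m) * v $ m)"
    using k w v by (intro mult_mat_vec_index_sum) auto
  also have "\<dots> = (\<Sum>m<d. (\<Sum>i<n. c i * Z i $ k * Z i $ m * v $ m) + (if m = k then n * lam * v $ k else 0))"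
    using k w
    by (intro sum.cong refl) (auto simp: hessL_def c_def sum.distrib sum_distrib_right distrib_right)
  also have "\<dots> = (\<Sum>i<n. \<Sum>m<d. c i * Z i $ k * Z i $ m * v $ m) + n * lam * v $ k"
    using k by (simp add: sum.distrib sum.swap[of _ "{..<d}"])
  also have "(\<Sum>i<n. \<Sum>m<d. c i * Z i $ k * Z i $ m * v $ m) = (\<Sum>i<n. c i * (Z i \<bullet> v) * Z i $ k)"
    using v by (intro sum.cong refl)
      (simp add: scalar_prod_def lessThan_atLeast0 sum_distrib_left mult_ac)
  finally show "(hessL l'' lam n Z y w *\<^sub>v v) $ k
      = vec d (\<lambda>k. (\<Sum>i<n. l'' (w \<bullet> Z i) (y i) * (Z i \<bullet> v) * Z i $ k) + n * lam * v $ k) $ k"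
    using k by (simp add: c_def)
qed (use w in \<open>simp add: hessL_def\<close>)

lemma hessL_quadratic_form:
  fixes Z :: "nat \<Rightarrow> real vec"
  assumes Z: "\<And>i. i < n \<Longrightarrow> Z i \<in> carrier_vec d" and w: "w \<in> carrier_vec d" and v: "v \<in> carrier_vec d"
  shows "v \<bullet> (hessL l'' lam n Z y w *\<^sub>v v) = (\<Sum>i<n. l'' (w \<bullet> Z i) (y i) * (Z i \<bullet> v)\<^sup>2) + n * lam * (v \<bullet> v)"
proof -
  define c where "c i = l'' (w \<bullet> Z i) (y i)" for i
  have "hessL l'' lam n Z y w *\<^sub>v v = vec d (\<lambda>k. (\<Sum>i<n. c i * (Z i \<bullet> v) * Z i $ k) + n * lam * v $ k)"
    unfolding c_def by (rule hessL_mult_vec) (use Z w v in auto)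
  then have "v \<bullet> (hessL l'' lam n Z y w *\<^sub>v v)
      = (\<Sum>k<d. v $ k * ((\<Sum>i<n. c i * (Z i \<bullet> v) * Z i $ k) + n * lam * v $ k))"
    using v by (simp add: scalar_prod_def lessThan_atLeast0)
  also have "\<dots> = (\<Sum>k<d. \<Sum>i<n. c i * (Z i \<bullet> v) * (v $ k * Z i $ k)) + n * lam * (\<Sum>k<d. v $ k * v $ k)"
    by (simp add: distrib_left sum.distrib sum_distrib_left mult_ac)
  also have "(\<Sum>k<d. \<Sum>i<n. c i * (Z i \<bullet> v) * (v $ k * Z i $ k))
      = (\<Sum>i<n. \<Sum>k<d. c i * (Z i \<bullet> v) * (v $ k * Z i $ k))"
    by (rule sum.swap)
  also have "\<dots> = (\<Sum>i<n. c i * (Z i \<bullet> v)\<^sup>2)"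
  proof (rule sum.cong[OF refl])
    fix i assume "i \<in> {..<n}"
    then have "(\<Sum>k<d. v $ k * Z i $ k) = Z i \<bullet> v"
      using Z[of i] v by (simp add: scalar_prod_def lessThan_atLeast0 mult.commute)
    then show "(\<Sum>k<d. c i * (Z i \<bullet> v) * (v $ k * Z i $ k)) = c i * (Z i \<bullet> v)\<^sup>2"
      by (simp add: power2_eq_square flip: sum_distrib_left)
  qed
  also have "(\<Sum>k<d. v $ k * v $ k) = v \<bullet> v" using v by (simp add: scalar_prod_def lessThan_atLeast0)
  finally show ?thesis by (simp add: c_def)
qed

lemma hessL_coercive:
  fixes Z :: "nat \<Rightarrow> real vec"
  assumes Z: "\<And>i. i < n \<Longrightarrow> Z i \<in> carrier_vec d" and w: "w \<in> carrier_vec d" and v: "v \<in> carrier_vec d"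
    and convex: "\<And>i. i < n \<Longrightarrow> 0 \<le> l'' (w \<bullet> Z i) (y i)"
  shows "n * lam * (v \<bullet> v) \<le> v \<bullet> (hessL l'' lam n Z y w *\<^sub>v v)"
  using hessL_quadratic_form[of n Z d, OF Z w v, of l'' lam y] convex by (auto intro!: sum_nonneg)

lemma coercive_mat_inverse:
  fixes H :: "real mat"
  assumes H: "H \<in> carrier_mat d d" and c: "0 < c"
    and coercive: "\<And>v. v \<in> carrier_vec d \<Longrightarrow> c * (v \<bullet> v) \<le> v \<bullet> (H *\<^sub>v v)"
  shows "matinv H \<in> carrier_mat d d" "H * matinv H = 1\<^sub>m d"
proof -
  have "det H \<noteq> 0"
  proof
    assume "det H = 0"
    then obtain v where v: "v \<in> carrier_vec d" "v \<noteq> 0\<^sub>v d" "H *\<^sub>v v = 0\<^sub>v d"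
      using det_0_iff_vec_prod_zero_field[OF H] by blast
    then show False
      using coercive[OF v(1)] mult_pos_pos[OF c scalar_prod_self_pos[OF v(1,2)]] by simp
  qed
  then have "H \<in> Units (ring_mat TYPE(real) d ())" by (rule det_non_zero_imp_unit[OF H])
  then have "\<exists>B. B \<in> carrier_mat (dim_row H) (dim_row H)
      \<and> B * H = 1\<^sub>m (dim_row H) \<and> H * B = 1\<^sub>m (dim_row H)"
    using H unfolding Units_def ring_mat_def by auto
  then have "matinv H \<in> carrier_mat (dim_row H) (dim_row H) \<and> H * matinv H = 1\<^sub>m (dim_row H)"
    unfolding matinv_def by (rule someI2_ex) blast
  then show "matinv H \<in> carrier_mat d d" "H * matinv H = 1\<^sub>m d" using H by auto
qed

lemma coercive_mat_solve:
  fixes H :: "real mat"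
  assumes H: "H \<in> carrier_mat d d" and c: "0 < c"
    and coercive: "\<And>v. v \<in> carrier_vec d \<Longrightarrow> c * (v \<bullet> v) \<le> v \<bullet> (H *\<^sub>v v)"
    and D: "D \<in> carrier_vec d"
  shows "matinv H *\<^sub>v D \<in> carrier_vec d" "H *\<^sub>v (matinv H *\<^sub>v D) = D"
    and "vnorm (matinv H *\<^sub>v D) \<le> vnorm D / c"
proof -
  let ?v = "matinv H *\<^sub>v D"
  note inv = coercive_mat_inverse[OF H c coercive]
  show v: "?v \<in> carrier_vec d" using inv D by simp
  show Hv: "H *\<^sub>v ?v = D"
    using inv D H by (simp flip: assoc_mult_mat_vec[OF H inv(1) D])
  have "c * (vnorm ?v)\<^sup>2 \<le> ?v \<bullet> D" using coercive[OF v] Hv by (simp add: vnorm_square)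
  also have "\<dots> \<le> vnorm ?v * vnorm D"
    using abs_le_D1[OF abs_scalar_prod_le_vnorm[of ?v D]] inv(1) D by simp
  finally have "vnorm ?v * (c * vnorm ?v) \<le> vnorm ?v * vnorm D" by (simp add: power2_eq_square mult_ac)
  then have "c * vnorm ?v \<le> vnorm D"
    using vnorm_nonneg[of ?v] c by (cases "vnorm ?v = 0") (simp_all add: mult_le_cancel_left_pos)
  then show "vnorm ?v \<le> vnorm D / c" using c by (simp add: field_simps)
qed

section \<open>One Newton step\<close>

lemma gradL_after_newton_step:
  fixes Z :: "nat \<Rightarrow> real vec"
  assumes Z: "\<And>i. i < n \<Longrightarrow> Z i \<in> carrier_vec d"
    and w: "w \<in> carrier_vec d" and v: "v \<in> carrier_vec d"
    and newton: "hessL l'' lam n Z y w *\<^sub>v v = D" and grad: "gradL l' lam n Z y w + D = 0\<^sub>v d"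
  shows "gradL l' lam n Z y (w + v) = vec d (\<lambda>k. \<Sum>i<n.
    (l' ((w + v) \<bullet> Z i) (y i) - l' (w \<bullet> Z i) (y i) - l'' (w \<bullet> Z i) (y i) * (Z i \<bullet> v)) * Z i $ k)"
proof (rule eq_vecI)
  fix k assume "k < dim_vec (vec d (\<lambda>k. \<Sum>i<n.
    (l' ((w + v) \<bullet> Z i) (y i) - l' (w \<bullet> Z i) (y i) - l'' (w \<bullet> Z i) (y i) * (Z i \<bullet> v)) * Z i $ k))"
  then have k: "k < d" by simp
  have D: "D \<in> carrier_vec d"
    unfolding newton[symmetric] using hessL_carrier[OF w] v by (rule mult_mat_vec_carrier)
  have "D $ k = (\<Sum>i<n. l'' (w \<bullet> Z i) (y i) * (Z i \<bullet> v) * Z i $ k) + n * lam * v $ k"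
    using arg_cong[OF newton, of "\<lambda>u. u $ k"] hessL_mult_vec[of n Z d w v l'' lam y] Z w v k by simp
  moreover have "(\<Sum>i<n. l' (w \<bullet> Z i) (y i) * Z i $ k) + n * lam * w $ k + D $ k = 0"
    using arg_cong[OF grad, of "\<lambda>u. u $ k"] w k D by (simp add: gradL_index)
  ultimately show "gradL l' lam n Z y (w + v) $ k = vec d (\<lambda>k. \<Sum>i<n.
    (l' ((w + v) \<bullet> Z i) (y i) - l' (w \<bullet> Z i) (y i) - l'' (w \<bullet> Z i) (y i) * (Z i \<bullet> v)) * Z i $ k) $ k"
    using w v k
    by (simp add: gradL_index left_diff_distrib sum_subtractf algebra_simps)
qed (use w v in simp)

lemma newton_residual_term_le:
  fixes z v w :: "real vec"
  assumes z: "z \<in> carrier_vec d" and v: "v \<in> carrier_vec d" and w: "w \<in> carrier_vec d"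
    and z_norm: "vnorm z \<le> F"
    and l'_deriv: "\<And>s. ((\<lambda>t. l' t c) has_real_derivative l'' s c) (at s)"
    and l''_lipschitz: "\<And>s t. \<bar>l'' s c - l'' t c\<bar> \<le> gamma2 * \<bar>s - t\<bar>"
  shows "\<bar>l' ((w + v) \<bullet> z) c - l' (w \<bullet> z) c - l'' (w \<bullet> z) c * (z \<bullet> v)\<bar> \<le> gamma2 * (vnorm v)\<^sup>2 * F\<^sup>2"
proof -
  have gamma2: "0 \<le> gamma2" using l''_lipschitz[of 1 0] by simp
  have "(w + v) \<bullet> z - w \<bullet> z = z \<bullet> v"
    by (simp add: add_scalar_prod_distrib[OF w v z] comm_scalar_prod[OF v z])
  then have "\<bar>l' ((w + v) \<bullet> z) c - l' (w \<bullet> z) c - l'' (w \<bullet> z) c * (z \<bullet> v)\<bar> \<le> gamma2 * (z \<bullet> v)\<^sup>2"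
    using lipschitz_deriv_taylor_remainder[OF l'_deriv l''_lipschitz, of "(w + v) \<bullet> z" "w \<bullet> z"] by simp
  also have "\<dots> \<le> gamma2 * (F * vnorm v)\<^sup>2"
  proof -
    have "\<bar>z \<bullet> v\<bar> \<le> F * vnorm v"
      using abs_scalar_prod_le_vnorm[of z v] z v mult_right_mono[OF z_norm vnorm_nonneg[of v]] by simp
    then have "\<bar>z \<bullet> v\<bar>\<^sup>2 \<le> (F * vnorm v)\<^sup>2" by (rule power_mono) simp
    then show ?thesis using gamma2 by (simp add: mult_left_mono)
  qed
  finally show ?thesis by (simp add: power_mult_distrib mult_ac)
qed

text \<open>The Hessian dominates \<open>n \<lambda> I\<close> and \<open>\<ell>''\<close> is \<open>\<gamma>\<^sub>2\<close>-Lipschitz, so the Newton residual is quadratic.\<close>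
lemma newton_step_gradient_bound:
  fixes Z :: "nat \<Rightarrow> real vec"
  assumes Z: "\<And>i. i < n \<Longrightarrow> Z i \<in> carrier_vec d" and Z_norm: "\<And>i. i < n \<Longrightarrow> vnorm (Z i) \<le> F"
    and l'_deriv: "\<And>s c. ((\<lambda>t. l' t c) has_real_derivative l'' s c) (at s)"
    and l''_lipschitz: "\<And>i s t. i < n \<Longrightarrow> \<bar>l'' s (y i) - l'' t (y i)\<bar> \<le> gamma2 * \<bar>s - t\<bar>"
    and l''_nonneg: "\<And>i. i < n \<Longrightarrow> 0 \<le> l'' (w \<bullet> Z i) (y i)"
    and n: "0 < n" and lam: "0 < lam"
    and w: "w \<in> carrier_vec d" and D: "D \<in> carrier_vec d"
    and grad: "gradL l' lam n Z y w + D = 0\<^sub>v d"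
  shows "vnorm (gradL l' lam n Z y (w + matinv (hessL l'' lam n Z y w) *\<^sub>v D))
      \<le> gamma2 * F ^ 3 / (lam\<^sup>2 * n) * (vnorm D)\<^sup>2"
proof -
  let ?H = "hessL l'' lam n Z y w"
  define v where "v = matinv ?H *\<^sub>v D"
  have coercive: "n * lam * (u \<bullet> u) \<le> u \<bullet> (?H *\<^sub>v u)" if "u \<in> carrier_vec d" for u
    by (rule hessL_coercive) (use Z w that l''_nonneg in auto)
  note solve = coercive_mat_solve[OF hessL_carrier[OF w] _ coercive D, folded v_def]
  have v: "v \<in> carrier_vec d" and Hv: "?H *\<^sub>v v = D" and v_norm: "vnorm v \<le> vnorm D / (n * lam)"
    using solve n lam by auto
  have F: "0 \<le> F" using Z_norm[OF n] vnorm_nonneg order_trans by blast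
  have gamma2: "0 \<le> gamma2" using l''_lipschitz[OF n, of 1 0] by simp
  define R where
    "R i = l' ((w + v) \<bullet> Z i) (y i) - l' (w \<bullet> Z i) (y i) - l'' (w \<bullet> Z i) (y i) * (Z i \<bullet> v)" for i
  have R: "\<bar>R i\<bar> \<le> gamma2 * (vnorm v)\<^sup>2 * F\<^sup>2" if "i < n" for i
    unfolding R_def
    by (rule newton_residual_term_le[where l' = l' and l'' = l'' and c = "y i",
          OF Z[OF that] v w Z_norm[OF that] l'_deriv l''_lipschitz[OF that]])
  have "gradL l' lam n Z y (w + v) = vec d (\<lambda>k. \<Sum>i<n. R i * Z i $ k)"
    unfolding R_def by (rule gradL_after_newton_step) (use Z w v Hv grad in auto)
  then have "vnorm (gradL l' lam n Z y (w + v)) \<le> (\<Sum>i<n. \<bar>R i\<bar> * vnorm (Z i))"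
    using vnorm_lincomb_le[of "{..<n}" Z d R] Z by simp
  also have "\<dots> \<le> (\<Sum>i<n. gamma2 * (vnorm v)\<^sup>2 * F\<^sup>2 * F)"
    using R Z_norm by (intro sum_mono mult_mono) (auto simp: gamma2)
  also have "\<dots> = n * gamma2 * F ^ 3 * (vnorm v)\<^sup>2"
    by (simp add: power2_eq_square power3_eq_cube mult_ac)
  also have "\<dots> \<le> n * gamma2 * F ^ 3 * (vnorm D / (n * lam))\<^sup>2"
    using v_norm gamma2 F by (intro mult_left_mono power_mono) auto
  also have "\<dots> = gamma2 * F ^ 3 / (lam\<^sup>2 * n) * (vnorm D)\<^sup>2"
    using n lam by (simp add: field_simps power2_eq_square)
  finally show ?thesis unfolding v_def .
qed

lemma gradL_diff_single_sample:
  fixes Z Z' :: "nat \<Rightarrow> real vec"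
  assumes m: "m < n" and same: "\<And>i. i < n \<Longrightarrow> i \<noteq> m \<Longrightarrow> Z' i = Z i"
    and Z: "Z m \<in> carrier_vec d" and Z': "Z' m \<in> carrier_vec d" and w: "w \<in> carrier_vec d"
  shows "gradL l' lam n Z y w - gradL l' lam n Z' y w
    = l' (w \<bullet> Z m) (y m) \<cdot>\<^sub>v Z m - l' (w \<bullet> Z' m) (y m) \<cdot>\<^sub>v Z' m"
proof (rule eq_vecI)
  fix k assume "k < dim_vec (l' (w \<bullet> Z m) (y m) \<cdot>\<^sub>v Z m - l' (w \<bullet> Z' m) (y m) \<cdot>\<^sub>v Z' m)"
  then have k: "k < d" using Z' by simp
  have "(\<Sum>i<n. l' (w \<bullet> Z i) (y i) * Z i $ k) - (\<Sum>i<n. l' (w \<bullet> Z' i) (y i) * Z' i $ k)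
      = (\<Sum>i<n. if i = m then l' (w \<bullet> Z m) (y m) * Z m $ k - l' (w \<bullet> Z' m) (y m) * Z' m $ k else 0)"
    unfolding sum_subtractf[symmetric] using same by (intro sum.cong) auto
  then show "(gradL l' lam n Z y w - gradL l' lam n Z' y w) $ k
      = (l' (w \<bullet> Z m) (y m) \<cdot>\<^sub>v Z m - l' (w \<bullet> Z' m) (y m) \<cdot>\<^sub>v Z' m) $ k"
    using k w Z Z' m by (simp add: gradL_index)
qed (use w Z' in simp)

lemma gradient_term_change_bound:
  fixes z z' w :: "real vec"
  assumes dims: "z \<in> carrier_vec d" "z' \<in> carrier_vec d" "w \<in> carrier_vec d"
    and w_norm: "vnorm w \<le> C1 / lam" and z_norm: "vnorm z \<le> F"
    and z_dist: "vnorm (z - z') \<le> F / sqrt g"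
    and C1: "vnorm (l' (w \<bullet> z) c \<cdot>\<^sub>v z) \<le> C1" "vnorm (l' (w \<bullet> z') c \<cdot>\<^sub>v z') \<le> C1"
    and C2: "\<bar>l' (w \<bullet> z') c\<bar> \<le> C2"
    and lipschitz: "\<And>s t. \<bar>l' s c - l' t c\<bar> \<le> gamma1 * \<bar>s - t\<bar>"
    and lam: "0 < lam" and g: "0 < g"
  shows "(vnorm (l' (w \<bullet> z) c \<cdot>\<^sub>v z - l' (w \<bullet> z') c \<cdot>\<^sub>v z'))\<^sup>2
    \<le> min (4 * C1\<^sup>2) ((gamma1 * C1 * F\<^sup>2 + lam * C2 * F)\<^sup>2 / (lam\<^sup>2 * g))"
proof -
  let ?a = "l' (w \<bullet> z) c" and ?b = "l' (w \<bullet> z') c"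
  let ?D = "?a \<cdot>\<^sub>v z - ?b \<cdot>\<^sub>v z'"
  have gamma1: "0 \<le> gamma1" using lipschitz[of 1 0] by simp
  have "vnorm ?D \<le> C1 + C1"
    using vnorm_diff_le[of "?a \<cdot>\<^sub>v z" "?b \<cdot>\<^sub>v z'"] C1 dims by simp
  then have trivial: "(vnorm ?D)\<^sup>2 \<le> (2 * C1)\<^sup>2" by (intro power_mono) auto
  have "\<bar>?a - ?b\<bar> \<le> gamma1 * \<bar>w \<bullet> (z - z')\<bar>"
    using lipschitz[of "w \<bullet> z" "w \<bullet> z'"] dims by (simp add: scalar_prod_minus_distrib)
  also have "\<dots> \<le> gamma1 * (C1 / lam * (F / sqrt g))"
  proof -
    have "\<bar>w \<bullet> (z - z')\<bar> \<le> vnorm w * vnorm (z - z')"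
      using dims by (intro abs_scalar_prod_le_vnorm) simp
    also have "\<dots> \<le> C1 / lam * (F / sqrt g)"
      by (rule mult_mono[OF w_norm z_dist]) (use order_trans[OF vnorm_nonneg w_norm] in auto)
    finally show ?thesis using gamma1 by (rule mult_left_mono)
  qed
  finally have ab: "\<bar>?a - ?b\<bar> \<le> gamma1 * (C1 / lam * (F / sqrt g))" .
  have "vnorm ?D \<le> \<bar>?a - ?b\<bar> * vnorm z + \<bar>?b\<bar> * vnorm (z - z')"
    using dims by (intro vnorm_smult_diff_le) simp
  also have "\<dots> \<le> gamma1 * (C1 / lam * (F / sqrt g)) * F + C2 * (F / sqrt g)"
    using order_trans[OF abs_ge_zero ab] order_trans[OF abs_ge_zero C2]
    by (intro add_mono mult_mono ab z_norm C2 z_dist) auto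
  also have "\<dots> = (gamma1 * C1 * F\<^sup>2 + lam * C2 * F) / (lam * sqrt g)"
    using lam g by (simp add: field_simps power2_eq_square)
  finally have "(vnorm ?D)\<^sup>2 \<le> ((gamma1 * C1 * F\<^sup>2 + lam * C2 * F) / (lam * sqrt g))\<^sup>2"
    by (intro power_mono) auto
  also have "\<dots> = (gamma1 * C1 * F\<^sup>2 + lam * C2 * F)\<^sup>2 / (lam\<^sup>2 * g)"
    using g by (simp add: power_divide power_mult_distrib)
  finally show ?thesis using trivial by (simp add: power_mult_distrib)
qed

lemma newton_update_sample_change_bound:
  fixes Z Z' :: "nat \<Rightarrow> real vec"
  assumes Z: "\<And>i. i < n \<Longrightarrow> Z i \<in> carrier_vec d" and Z': "\<And>i. i < n \<Longrightarrow> Z' i \<in> carrier_vec d"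
    and m: "m < n" and same: "\<And>i. i < n \<Longrightarrow> i \<noteq> m \<Longrightarrow> Z' i = Z i"
    and Z_norm: "\<And>i. i < n \<Longrightarrow> vnorm (Z i) \<le> F" and Z'_norm: "\<And>i. i < n \<Longrightarrow> vnorm (Z' i) \<le> F"
    and Z_dist: "vnorm (Z m - Z' m) \<le> F / sqrt g" and g: "0 < g"
    and l_deriv: "\<And>s c. ((\<lambda>t. l t c) has_real_derivative l' s c) (at s)"
    and l'_deriv: "\<And>s c. ((\<lambda>t. l' t c) has_real_derivative l'' s c) (at s)"
    and l_convex: "\<And>c. convex_on UNIV (\<lambda>t. l t c)"
    and lam: "0 < lam"
    and C1: "\<And>i. i < n \<Longrightarrow> vnorm (l' (w \<bullet> Z i) (y i) \<cdot>\<^sub>v Z i) \<le> C1"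
      "vnorm (l' (w \<bullet> Z' m) (y m) \<cdot>\<^sub>v Z' m) \<le> C1"
    and C2: "\<bar>l' (w \<bullet> Z' m) (y m)\<bar> \<le> C2"
    and l'_lipschitz: "\<And>s t. \<bar>l' s (y m) - l' t (y m)\<bar> \<le> gamma1 * \<bar>s - t\<bar>"
    and l''_lipschitz: "\<And>i s t. i < n \<Longrightarrow> \<bar>l'' s (y i) - l'' t (y i)\<bar> \<le> gamma2 * \<bar>s - t\<bar>"
    and w: "w \<in> carrier_vec d"
    and w_min: "\<And>v. v \<in> carrier_vec d \<Longrightarrow> lossL l lam n Z y w \<le> lossL l lam n Z y v"
  shows "vnorm (gradL l' lam n Z' y (w + matinv (hessL l'' lam n Z' y w) *\<^sub>v
      (gradL l' lam n Z y w - gradL l' lam n Z' y w)))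
    \<le> gamma2 * F ^ 3 / (lam\<^sup>2 * n)
      * min (4 * C1\<^sup>2) ((gamma1 * C1 * F\<^sup>2 + lam * C2 * F)\<^sup>2 / (lam\<^sup>2 * g))"
proof -
  define Delta where "Delta = gradL l' lam n Z y w - gradL l' lam n Z' y w"
  have n: "0 < n" using m by simp
  have crit: "gradL l' lam n Z y w = 0\<^sub>v d"
    using gradL_zero_at_minimum[OF _ l_deriv w w_min] Z by blast
  have w_norm: "vnorm w \<le> C1 / lam"
    using vnorm_critical_point_le[OF _ n lam w crit] Z C1(1) by blast
  have "(vnorm (l' (w \<bullet> Z m) (y m) \<cdot>\<^sub>v Z m - l' (w \<bullet> Z' m) (y m) \<cdot>\<^sub>v Z' m))\<^sup>2
      \<le> min (4 * C1\<^sup>2) ((gamma1 * C1 * F\<^sup>2 + lam * C2 * F)\<^sup>2 / (lam\<^sup>2 * g))"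
    by (rule gradient_term_change_bound[where l' = l' and c = "y m" and d = d])
      (use Z[OF m] Z'[OF m] w w_norm Z_norm[OF m] Z_dist C1(1)[OF m] C1(2) C2 l'_lipschitz lam g
        in auto)
  moreover have "Delta = l' (w \<bullet> Z m) (y m) \<cdot>\<^sub>v Z m - l' (w \<bullet> Z' m) (y m) \<cdot>\<^sub>v Z' m"
    unfolding Delta_def by (rule gradL_diff_single_sample) (use m same Z Z' w in auto)
  ultimately have "(vnorm Delta)\<^sup>2 \<le> min (4 * C1\<^sup>2) ((gamma1 * C1 * F\<^sup>2 + lam * C2 * F)\<^sup>2 / (lam\<^sup>2 * g))"
    by simp
  moreover have "gradL l' lam n Z' y w + Delta = 0\<^sub>v d"
    using crit w by (auto simp: Delta_def intro!: eq_vecI)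
  then have "vnorm (gradL l' lam n Z' y (w + matinv (hessL l'' lam n Z' y w) *\<^sub>v Delta))
      \<le> gamma2 * F ^ 3 / (lam\<^sup>2 * n) * (vnorm Delta)\<^sup>2"
    by (intro newton_step_gradient_bound[where Z = Z' and l'' = l'' and d = d and F = F])
      (use Z' Z'_norm l'_deriv l''_lipschitz n lam w
        convex_second_deriv_nonneg[OF l_convex l_deriv l'_deriv] in \<open>auto simp: Delta_def\<close>)
  moreover have "0 \<le> gamma2 * F ^ 3 / (lam\<^sup>2 * n)"
    using l''_lipschitz[OF n, of 1 0] order_trans[OF vnorm_nonneg Z_norm[OF n]] by simp
  ultimately show ?thesis unfolding Delta_def by (meson mult_left_mono order_trans)
qed

theorem theorem4p2:
  fixes n J L :: nat
    and g :: "nat \<Rightarrow> nat"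
    and S :: "nat \<Rightarrow> real mat"
    and x :: "nat \<Rightarrow> real vec"
    and y :: "nat \<Rightarrow> 'y"
    and h :: "nat \<Rightarrow> real \<Rightarrow> real"
    and A B :: real
    and l l' l'' :: "real \<Rightarrow> 'y \<Rightarrow> real"
    and lam C1 C2 gamma1 gamma2 :: real
    and wstar :: "real vec"
    and x' :: "real vec"
  assumes n_pos: "n \<ge> 1" and J_pos: "J \<ge> 1" and L_pos: "L \<ge> 1"
    and g_pos: "\<And>i. i < n \<Longrightarrow> g i \<ge> 1"
    and S_carrier: "\<And>i. i < n \<Longrightarrow> S i \<in> carrier_mat (g i) (g i)"
    and S_sym: "\<And>i. i < n \<Longrightarrow> transpose_mat (S i) = S i"
    and x_dim: "\<And>i. i < n \<Longrightarrow> x i \<in> carrier_vec (g i)"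
    and frame_consts: "0 < A" "A \<le> B"
    and frame: "\<And>i v. i < n \<Longrightarrow> v \<in> carrier_vec (g i) \<Longrightarrow>
        A\<^sup>2 * (vnorm v)\<^sup>2 \<le> (\<Sum>j=1..J. (vnorm (wavelet h j (S i) *\<^sub>v v))\<^sup>2)
      \<and> (\<Sum>j=1..J. (vnorm (wavelet h j (S i) *\<^sub>v v))\<^sup>2) \<le> B\<^sup>2 * (vnorm v)\<^sup>2"
    and l_deriv: "\<And>s c. ((\<lambda>t. l t c) has_real_derivative l' s c) (at s)"
    and l'_deriv: "\<And>s c. ((\<lambda>t. l' t c) has_real_derivative l'' s c) (at s)"
    and l_convex: "\<And>c. convex_on UNIV (\<lambda>t. l t c)"
    and lam_pos: "lam > 0"
    and x'_def: "x' = vec (g (n-1)) (\<lambda>k. if k = g (n-1) - 1 then 0 else x (n-1) $ k)"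
    and A1: "\<And>i w. i < n \<Longrightarrow> w \<in> carrier_vec (\<Sum>k<L. J ^ k) \<Longrightarrow>
        vnorm (l' (scalar_prod w (gst h J L (S i) (x i))) (y i) \<cdot>\<^sub>v gst h J L (S i) (x i)) \<le> C1
      \<and> vnorm (l' (scalar_prod w (gst h J L (S i) (if i = n-1 then x' else x i))) (y i)
              \<cdot>\<^sub>v gst h J L (S i) (if i = n-1 then x' else x i)) \<le> C1"
    and A2: "\<And>i w. i < n \<Longrightarrow> w \<in> carrier_vec (\<Sum>k<L. J ^ k) \<Longrightarrow>
        \<bar>l' (scalar_prod w (gst h J L (S i) (x i))) (y i)\<bar> \<le> C2
      \<and> \<bar>l' (scalar_prod w (gst h J L (S i) (if i = n-1 then x' else x i))) (y i)\<bar> \<le> C2"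
    and A3: "\<And>i s t. i < n \<Longrightarrow> \<bar>l' s (y i) - l' t (y i)\<bar> \<le> gamma1 * \<bar>s - t\<bar>"
    and A4: "\<And>i s t. i < n \<Longrightarrow> \<bar>l'' s (y i) - l'' t (y i)\<bar> \<le> gamma2 * \<bar>s - t\<bar>"
    and A5: "\<And>i k. i < n \<Longrightarrow> k < g i \<Longrightarrow> \<bar>x i $ k\<bar> \<le> 1"
    and wstar_dim: "wstar \<in> carrier_vec (\<Sum>k<L. J ^ k)"
    and wstar_min: "\<And>w. w \<in> carrier_vec (\<Sum>k<L. J ^ k) \<Longrightarrow>
        lossL l lam n (\<lambda>i. gst h J L (S i) (x i)) y wstar
          \<le> lossL l lam n (\<lambda>i. gst h J L (S i) (x i)) y w"
  shows
    "let Z = (\<lambda>i. gst h J L (S i) (x i));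
         Z' = (\<lambda>i. gst h J L (S i) (if i = n-1 then x' else x i));
         Hw = hessL l'' lam n Z' y wstar;
         Delta = gradL l' lam n Z y wstar - gradL l' lam n Z' y wstar;
         w' = wstar + matinv Hw *\<^sub>v Delta;
         F = sqrt (\<Sum>k<L. B ^ (2 * k))
     in vnorm (gradL l' lam n Z' y w')
          \<le> gamma2 * F ^ 3 / (lam\<^sup>2 * real n)
            * min (4 * C1\<^sup>2) ((gamma1 * C1 * F\<^sup>2 + lam * C2 * F)\<^sup>2 / (lam\<^sup>2 * real (g (n-1))))"
proof -
  define m where "m = n - 1"
  define F where "F = sqrt (\<Sum>k<L. B ^ (2 * k))"
  have m: "m < n" and g_m: "0 < g m" using n_pos g_pos[of m] by (auto simp: m_def)
  have frame_i: "upper_frame h J (S i) (g i) B" if "i < n" for i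
    using frame[OF that] matfun_carrier[OF S_carrier[OF that] S_sym[OF that]]
    by unfold_locales (auto simp: wavelet_def)
  have x': "x' \<in> carrier_vec (g m)" "\<And>k. k < g m \<Longrightarrow> \<bar>x' $ k\<bar> \<le> 1" "vnorm (x m - x') \<le> 1"
    using remove_last_feature[OF x_dim[OF m] g_m A5[OF m]] unfolding x'_def m_def by auto
  have gst_norm: "vnorm (gst h J L (S i) u) \<le> F"
    if "i < n" "u \<in> carrier_vec (g i)" "\<And>k. k < g i \<Longrightarrow> \<bar>u $ k\<bar> \<le> 1" for i u
    using upper_frame.gst_norm_le[OF frame_i[OF that(1)] that(2) _ that(3)] g_pos[OF that(1)]
    unfolding F_def by simp
  have "vnorm (gst h J L (S m) (x m) - gst h J L (S m) x') \<le> F * vnorm (x m - x') / sqrt (g m)"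
    using upper_frame.gst_lipschitz[OF frame_i[OF m] x_dim[OF m] x'(1)] unfolding F_def by simp
  also have "\<dots> \<le> F / sqrt (g m)"
    using x'(3) by (simp add: F_def sum_even_powers_nonneg divide_right_mono mult_left_le)
  finally have gst_dist: "vnorm (gst h J L (S m) (x m) - gst h J L (S m) x') \<le> F / sqrt (g m)" .
  show ?thesis
    unfolding Let_def F_def[symmetric] m_def[symmetric]
    by (rule newton_update_sample_change_bound[where d = "\<Sum>k<L. J ^ k" and m = m and l = l
        and Z = "\<lambda>i. gst h J L (S i) (x i)" and Z' = "\<lambda>i. gst h J L (S i) (if i = m then x' else x i)"])
      (use m A1[OF _ wstar_dim] A1[OF m wstar_dim] A2[OF m wstar_dim] A3[OF m] A4 x_dim A5 x' g_m
        wstar_dim wstar_min gst_norm gst_dist l_deriv l'_deriv l_convex lam_pos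
        in \<open>auto simp: m_def\<close>)
qed

end
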